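(* Let $p$ be a prime and let $\Gamma$ be a finite connected $G$-arc-transitive graph of prime valency $p$, with $G\leqslant\mathrm{Aut}(\Gamma)$ acting quasiprimitively or biquasiprimitively on $\mathrm V(\Gamma)$. Suppose that either (a) $\Gamma=\mathrm K_{12}$, $G=\mathrm M_{11}$ and $p=11$; or (b) $|\mathrm V(\Gamma)|=(p^2-1)/2s$ and $G=\mathrm{PSL}_2(p)$ or $\mathrm{PGL}_2(p)$, where $p$ is a Mersenne prime and $\mathrm C_r\leqslant \mathrm C_s<\mathrm C_{(p-1)/2}$, with $r$ the product of the distinct prime divisors of $(p-1)/2$. Then $\Gamma$ contains a triangle.
   Context: A graph is $G$-arc-transitive if $G$ acts transitively on its arcs. A permutation group is quasiprimitive if every nontrivial normal subgroup is transitive, and biquasiprimitive if it is not quasiprimitive and every nontrivial normal subgroup has at most two orbits. $\mathrm C_n$ denotes the cyclic group of order $n$. A triangle is a set of three pairwise adjacent vertices. *)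

theory Defs
  imports "HOL-Algebra.Bij" "HOL-Algebra.Coset" "HOL-Algebra.Generated_Groups"
          "HOL-Computational_Algebra.Primes" "HOL-Number_Theory.Cong"
begin

definition simple_graph :: "'v set \<Rightarrow> ('v \<Rightarrow> 'v \<Rightarrow> bool) \<Rightarrow> bool" where
  "simple_graph V E \<longleftrightarrow> finite V \<and> (\<forall>x y. E x y \<longrightarrow> x \<in> V \<and> y \<in> V)
     \<and> (\<forall>x y. E x y \<longrightarrow> E y x) \<and> (\<forall>x. \<not> E x x)"

definition graph_connected :: "'v set \<Rightarrow> ('v \<Rightarrow> 'v \<Rightarrow> bool) \<Rightarrow> bool" where
  "graph_connected V E \<longleftrightarrow>
     (\<forall>u\<in>V. \<forall>v\<in>V. (u, v) \<in> {(x, y). x \<in> V \<and> y \<in> V \<and> E x y}\<^sup>*)"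

definition valency :: "'v set \<Rightarrow> ('v \<Rightarrow> 'v \<Rightarrow> bool) \<Rightarrow> nat \<Rightarrow> bool" where
  "valency V E k \<longleftrightarrow> (\<forall>v\<in>V. card {u \<in> V. E v u} = k)"

definition arcs :: "'v set \<Rightarrow> ('v \<Rightarrow> 'v \<Rightarrow> bool) \<Rightarrow> ('v \<times> 'v) set" where
  "arcs V E = {(u, v). u \<in> V \<and> v \<in> V \<and> E u v}"

definition graph_aut :: "'v set \<Rightarrow> ('v \<Rightarrow> 'v \<Rightarrow> bool) \<Rightarrow> ('v \<Rightarrow> 'v) set" where
  "graph_aut V E = {g \<in> Bij V. \<forall>x\<in>V. \<forall>y\<in>V. E x y \<longleftrightarrow> E (g x) (g y)}"

definition arc_transitive :: "'v set \<Rightarrow> ('v \<Rightarrow> 'v \<Rightarrow> bool) \<Rightarrow> ('v \<Rightarrow> 'v) set \<Rightarrow> bool" where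
  "arc_transitive V E G \<longleftrightarrow>
     (\<forall>a\<in>arcs V E. \<forall>b\<in>arcs V E. \<exists>g\<in>G. g (fst a) = fst b \<and> g (snd a) = snd b)"

definition is_complete_graph :: "'v set \<Rightarrow> ('v \<Rightarrow> 'v \<Rightarrow> bool) \<Rightarrow> nat \<Rightarrow> bool" where
  "is_complete_graph V E n \<longleftrightarrow> card V = n \<and> (\<forall>x\<in>V. \<forall>y\<in>V. x \<noteq> y \<longrightarrow> E x y)"

definition has_triangle :: "'v set \<Rightarrow> ('v \<Rightarrow> 'v \<Rightarrow> bool) \<Rightarrow> bool" where
  "has_triangle V E \<longleftrightarrow> (\<exists>x\<in>V. \<exists>y\<in>V. \<exists>z\<in>V. x \<noteq> y \<and> y \<noteq> z \<and> x \<noteq> z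
      \<and> E x y \<and> E y z \<and> E x z)"

definition perm_group :: "'v set \<Rightarrow> ('v \<Rightarrow> 'v) set \<Rightarrow> ('v \<Rightarrow> 'v) monoid" where
  "perm_group V G = (BijGroup V)\<lparr>carrier := G\<rparr>"

definition perm_orbits :: "'v set \<Rightarrow> ('v \<Rightarrow> 'v) set \<Rightarrow> 'v set set" where
  "perm_orbits V N = {(\<lambda>g. g x) ` N | x. x \<in> V}"

definition quasiprimitive :: "'v set \<Rightarrow> ('v \<Rightarrow> 'v) set \<Rightarrow> bool" where
  "quasiprimitive V G \<longleftrightarrow>
     (\<forall>N. N \<lhd> perm_group V G \<and> N \<noteq> {\<one>\<^bsub>perm_group V G\<^esub>}
        \<longrightarrow> (\<forall>x\<in>V. \<forall>y\<in>V. \<exists>g\<in>N. g x = y))"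

definition biquasiprimitive :: "'v set \<Rightarrow> ('v \<Rightarrow> 'v) set \<Rightarrow> bool" where
  "biquasiprimitive V G \<longleftrightarrow> \<not> quasiprimitive V G \<and>
     (\<forall>N. N \<lhd> perm_group V G \<and> N \<noteq> {\<one>\<^bsub>perm_group V G\<^esub>}
        \<longrightarrow> card (perm_orbits V N) \<le> 2)"

text \<open>M11 as the subgroup of Sym({0..10}) generated by (1,...,11) and (3,7,11,8)(4,10,5,6)
  (written 1-based; here shifted to points 0..10).\<close>
definition m11_a :: "nat \<Rightarrow> nat" where
  "m11_a = (\<lambda>i\<in>{0..<11}. (i + 1) mod 11)"

definition m11_b :: "nat \<Rightarrow> nat" where
  "m11_b = (\<lambda>i\<in>{0..<11}. if i = 2 then 6 else if i = 6 then 10 else if i = 10 then 7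
      else if i = 7 then 2 else if i = 3 then 9 else if i = 9 then 4 else if i = 4 then 5
      else if i = 5 then 3 else i)"

definition M11 :: "(nat \<Rightarrow> nat) monoid" where
  "M11 = perm_group {0..<11} (generate (BijGroup {0..<11}) {m11_a, m11_b})"

text \<open>Projective line over GF(p): points 0..p-1 are the field elements x (homogeneous
  coordinates (x,1)), point p is infinity (coordinates (1,0)).\<close>
definition hcoord :: "nat \<Rightarrow> nat \<Rightarrow> int \<times> int" where
  "hcoord p x = (if x = p then (1, 0) else (int x, 1))"

text \<open>sigma is the Moebius transformation induced by the matrix [[a,b],[c,d]].\<close>
definition moebius_perm :: "nat \<Rightarrow> int \<Rightarrow> int \<Rightarrow> int \<Rightarrow> int \<Rightarrow> (nat \<Rightarrow> nat) \<Rightarrow> bool" where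
  "moebius_perm p a b c d \<sigma> \<longleftrightarrow>
     (\<forall>x\<in>{0..p}. [(a * fst (hcoord p x) + b * snd (hcoord p x)) * snd (hcoord p (\<sigma> x))
                 = (c * fst (hcoord p x) + d * snd (hcoord p x)) * fst (hcoord p (\<sigma> x))] (mod int p))"

definition PGL2 :: "nat \<Rightarrow> (nat \<Rightarrow> nat) monoid" where
  "PGL2 p = perm_group {0..p}
     {\<sigma> \<in> Bij {0..p}. \<exists>a b c d. \<not> [a * d - b * c = 0] (mod int p) \<and> moebius_perm p a b c d \<sigma>}"

text \<open>PSL2(p): image of SL2(p), i.e. the Moebius maps whose matrix has determinant 1
  (equivalently, up to scalars, a nonzero square determinant).\<close>
definition PSL2 :: "nat \<Rightarrow> (nat \<Rightarrow> nat) monoid" where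
  "PSL2 p = perm_group {0..p}
     {\<sigma> \<in> Bij {0..p}. \<exists>a b c d. [a * d - b * c = 1] (mod int p) \<and> moebius_perm p a b c d \<sigma>}"

definition mersenne_prime :: "nat \<Rightarrow> bool" where
  "mersenne_prime p \<longleftrightarrow> prime p \<and> (\<exists>k. p = 2 ^ k - 1)"

end

theory Submission
  imports Defs "HOL-Number_Theory.Modular_Inverse" "HOL-Number_Theory.Euler_Criterion"
    "HOL-Algebra.Group_Action" "HOL-Algebra.Sylow"
begin

text \<open>
  The stabiliser of a vertex \<open>v\<close> acts transitively on the \<open>p\<close> neighbours of \<open>v\<close>, so it
  contains an element \<open>\<tau>\<close> of order \<open>p\<close>. Realise \<open>G\<close> by Moebius transformations of the
  projective line over \<open>GF(p)\<close> and conjugate so that \<open>\<tau>\<close> fixes \<open>\<infinity>\<close>; then \<open>\<tau>\<close> is a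
  translation and every translation \<open>z \<mapsto> z + e\<close> lies in the stabiliser. By connectivity some
  \<open>x \<in> G\<close> maps \<open>v\<close> to a neighbour and moves \<open>\<infinity>\<close>. For a suitable upper triangular \<open>A\<close> in
  the stabiliser and a suitable translation \<open>T\<close>, the matrix of \<open>g = A T x\<close> has
  \<open>trace\<^sup>2 = det\<close>, so \<open>g\<^sup>3 = 1\<close> by Cayley--Hamilton, and \<open>v, g v, g\<^sup>2 v\<close> is a triangle.
  For \<open>PSL\<^sub>2(p)\<close> take \<open>A = 1\<close>. For \<open>PGL\<^sub>2(p)\<close>, as \<open>p \<equiv> 3 (mod 4)\<close>, either
  \<open>det\<close> or \<open>-det\<close> is a square; in the second case \<open>A\<close> is an involution of the stabiliser,
  which fixes \<open>\<infinity>\<close> since otherwise the stabiliser, of order \<open>2ps < p\<^sup>2\<close>, would contain the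
  \<open>p\<^sup>2\<close> distinct elements \<open>\<tau>\<^sup>i A \<tau>\<^sup>j A\<close>. The graph \<open>K\<^sub>1\<^sub>2\<close> is trivial.
\<close>

section \<open>Integer 2-by-2 matrices\<close>

type_synonym mat = "int \<times> int \<times> int \<times> int"

fun mat_apply :: "mat \<Rightarrow> int \<times> int \<Rightarrow> int \<times> int" where
  "mat_apply (a, b, c, d) (x, y) = (a * x + b * y, c * x + d * y)"

fun mat_mult :: "mat \<Rightarrow> mat \<Rightarrow> mat" where
  "mat_mult (a, b, c, d) (a', b', c', d') =
     (a * a' + b * c', a * b' + b * d', c * a' + d * c', c * b' + d * d')"

fun mat_det :: "mat \<Rightarrow> int" where
  "mat_det (a, b, c, d) = a * d - b * c"

fun mat_trace :: "mat \<Rightarrow> int" where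
  "mat_trace (a, b, c, d) = a + d"

fun mat_pow :: "mat \<Rightarrow> nat \<Rightarrow> mat" where
  "mat_pow M 0 = (1, 0, 0, 1)"
| "mat_pow M (Suc n) = mat_mult (mat_pow M n) M"

lemma mat_apply_mat_mult: "mat_apply (mat_mult M N) x = mat_apply M (mat_apply N x)"
  by (cases M; cases N; cases x) (simp add: algebra_simps)

lemma mat_det_mat_mult: "mat_det (mat_mult M N) = mat_det M * mat_det N"
  by (cases M; cases N) (simp add: algebra_simps)

lemma mat_mult_assoc: "mat_mult (mat_mult A B) C = mat_mult A (mat_mult B C)"
  by (cases A; cases B; cases C) (simp add: algebra_simps)

lemma mat_pow_upper_triangular: "\<exists>x. mat_pow (a, b, 0, d) n = (a ^ n, x, 0, d ^ n)"
  by (induction n) auto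

lemma mat_pow_translation: "mat_pow (1, e, 0, 1) n = (1, int n * e, 0, 1)"
  by (induction n) (auto simp: algebra_simps)

lemma mat_cube_Cayley_Hamilton:
  "mat_mult (mat_mult (a, b, c, d) (a, b, c, d)) (a, b, c, d) =
    (((a + d)\<^sup>2 - (a * d - b * c)) * a - (a + d) * (a * d - b * c), ((a + d)\<^sup>2 - (a * d - b * c)) * b,
     ((a + d)\<^sup>2 - (a * d - b * c)) * c, ((a + d)\<^sup>2 - (a * d - b * c)) * d - (a + d) * (a * d - b * c))"
  by (simp add: algebra_simps power2_eq_square)

section \<open>Moebius transformations of the projective line over GF(p)\<close>

definition cross :: "int \<times> int \<Rightarrow> int \<times> int \<Rightarrow> int" where
  "cross u v = fst u * snd v - snd u * fst v"

definition nonzero_mod :: "nat \<Rightarrow> int \<times> int \<Rightarrow> bool" where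
  "nonzero_mod p u \<longleftrightarrow> \<not> (int p dvd fst u \<and> int p dvd snd u)"

definition proj_point :: "nat \<Rightarrow> int \<times> int \<Rightarrow> nat" where
  "proj_point p u = (if int p dvd snd u then p
     else nat ((fst u * modular_inverse (int p) (snd u)) mod int p))"

definition moebius :: "nat \<Rightarrow> mat \<Rightarrow> nat \<Rightarrow> nat" where
  "moebius p M = (\<lambda>z\<in>{0..p}. proj_point p (mat_apply M (hcoord p z)))"

lemma hcoord_infinity [simp]: "hcoord p p = (1, 0)"
  by (simp add: hcoord_def)

locale prime_modulus =
  fixes p :: nat
  assumes prime: "prime p"
begin

abbreviation mat_invertible :: "mat \<Rightarrow> bool" where
  "mat_invertible M \<equiv> \<not> int p dvd mat_det M"

lemma int_p_pos: "0 < int p"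
  using prime_gt_0_nat[OF prime] by simp

lemma not_dvd_one: "\<not> int p dvd 1"
  using prime_gt_1_nat[OF prime] by simp

lemma dvd_mult_iff: "int p dvd x * y \<longleftrightarrow> int p dvd x \<or> int p dvd y"
  using prime by (simp add: prime_dvd_mult_iff)

lemma modular_inverse_right: "\<not> int p dvd u \<Longrightarrow> int p dvd u * modular_inverse (int p) u - 1"
  using prime cong_modular_inverse1[of u "int p"]
  by (metis coprime_commute cong_iff_dvd_diff prime_imp_coprime prime_nat_int_transfer)

lemma modular_inverse_one [simp]: "modular_inverse (int p) 1 = 1"
  using prime_gt_1_nat[OF prime] by simp

lemma mod_residue_eq:
  assumes "a < p" "b < p" "\<not> int p dvd \<beta>" "int p dvd (int a - int b) * \<beta>"
  shows "a = b"
proof -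
  have "int p dvd int a - int b" using assms(3,4) by (simp add: dvd_mult_iff)
  then have "int a mod int p = int b mod int p" by (simp add: mod_eq_dvd_iff)
  then show ?thesis using assms(1,2) by simp
qed

lemma fermat_int: "int p dvd a ^ p - a"
proof (cases "int p dvd a")
  case True
  moreover have "a dvd a ^ p" using prime_gt_0_nat[OF prime] by (simp add: dvd_power)
  ultimately show ?thesis by (metis dvd_diff dvd_trans)
next
  case False
  define n where "n = nat (a mod int p)"
  have n: "int n = a mod int p" using int_p_pos by (simp add: n_def)
  then have "\<not> int p dvd int n" using False by (simp add: dvd_mod_iff)
  then have "\<not> p dvd n" by simp
  then have "[int n ^ (p - 1) = 1] (mod int p)"
    using fermat_theorem[OF prime] by (metis cong_int_iff of_nat_1 of_nat_power)
  moreover have "[int n = a] (mod int p)" using n by (simp add: cong_def)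
  ultimately have "[a * a ^ (p - 1) = a * 1] (mod int p)"
    by (metis cong_pow cong_scalar_left cong_sym cong_trans)
  moreover have "a * a ^ (p - 1) = a ^ p" using prime_gt_0_nat[OF prime]
    by (metis Suc_diff_1 power_Suc)
  ultimately show ?thesis by (simp add: cong_iff_dvd_diff)
qed

text \<open>For \<open>p \<equiv> 3 (mod 4)\<close>, \<open>-1\<close> is a non-square modulo \<open>p\<close>.\<close>
lemma square_or_neg_square:
  assumes "p mod 4 = 3" "\<not> int p dvd D"
  shows "(\<exists>w. int p dvd w\<^sup>2 - D) \<or> (\<exists>w. int p dvd w\<^sup>2 + D)"
proof -
  have p2: "2 < p" using assms(1) prime_gt_1_nat[OF prime] by (cases "p = 2") auto
  have odd_exp: "odd ((p - 1) div 2)" using assms(1) by presburger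
  have euler: "[Legendre x (int p) = x ^ ((p - 1) div 2)] (mod int p)" for x
    using euler_criterion[OF prime p2] by simp
  have nonres: "Legendre x (int p) = -1" if "\<not> QuadRes (int p) x" "\<not> int p dvd x" for x
    using that by (simp add: Legendre_def cong_0_iff)
  have "QuadRes (int p) D \<or> QuadRes (int p) (- D)"
  proof (rule ccontr)
    assume "\<not> ?thesis"
    then have "[-1 = D ^ ((p - 1) div 2)] (mod int p)" "[-1 = - (D ^ ((p - 1) div 2))] (mod int p)"
      using euler[of D] euler[of "- D"] nonres[of D] nonres[of "- D"] assms(2) odd_exp by simp_all
    then have "[-1 = 1] (mod int p)" by (metis cong_minus_minus_iff cong_sym cong_trans minus_minus)
    then have "p dvd 2" by (simp add: cong_iff_dvd_diff) (metis int_dvd_int_iff of_nat_numeral)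
    then show False using p2 by (simp add: nat_dvd_not_less)
  qed
  then show ?thesis by (auto simp: QuadRes_def cong_iff_dvd_diff)
qed

lemma proj_point_le: "proj_point p u \<le> p"
proof -
  have "(fst u * modular_inverse (int p) (snd u)) mod int p < int p" using int_p_pos by simp
  then show ?thesis unfolding proj_point_def by auto
qed

lemma proj_point_less: "\<not> int p dvd snd u \<Longrightarrow> proj_point p u < p"
  using int_p_pos by (simp add: proj_point_def nat_less_iff)

lemma nonzero_mod_hcoord: "nonzero_mod p (hcoord p y)"
  using prime_gt_1_nat[OF prime] by (auto simp: hcoord_def nonzero_mod_def zdvd_not_zless)

lemma cross_proj_point:
  assumes "nonzero_mod p u"
  shows "int p dvd cross u (hcoord p (proj_point p u))"
proof (cases "int p dvd snd u")
  case True
  then show ?thesis by (simp add: proj_point_def cross_def)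
next
  case False
  let ?i = "modular_inverse (int p) (snd u)"
  let ?y = "(fst u * ?i) mod int p"
  have "hcoord p (proj_point p u) = (?y, 1)"
    using False proj_point_less[OF False] int_p_pos by (simp add: hcoord_def proj_point_def)
  then have "cross u (hcoord p (proj_point p u))
      = - (fst u * (snd u * ?i - 1)) - snd u * (?y - fst u * ?i)"
    by (simp add: cross_def algebra_simps)
  moreover have "int p dvd ?y - fst u * ?i"
    by (simp add: mod_eq_dvd_iff[symmetric])
  ultimately show ?thesis
    using modular_inverse_right[OF False] by (simp add: dvd_diff)
qed

lemma proj_point_unique:
  assumes "nonzero_mod p u" "y \<le> p" "int p dvd cross u (hcoord p y)"
  shows "y = proj_point p u"
proof (cases "y = p")
  case True
  then show ?thesis using assms(3) by (simp add: cross_def proj_point_def)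
next
  case False
  let ?i = "modular_inverse (int p) (snd u)"
  have d: "int p dvd fst u - snd u * int y" using assms(3) False by (simp add: cross_def hcoord_def)
  have nd: "\<not> int p dvd snd u"
  proof
    assume "int p dvd snd u"
    with d have "int p dvd fst u" by (metis dvd_diff_commute dvd_add_right_iff diff_add_cancel dvd_mult2)
    with \<open>int p dvd snd u\<close> show False using assms(1) by (simp add: nonzero_mod_def)
  qed
  have "fst u * ?i - int y = (fst u - snd u * int y) * ?i + int y * (snd u * ?i - 1)"
    by (simp add: algebra_simps)
  then have "int p dvd fst u * ?i - int y"
    using d modular_inverse_right[OF nd] by simp
  then have "(fst u * ?i) mod int p = int y mod int p"
    by (simp add: mod_eq_dvd_iff)
  also have "\<dots> = int y" using False assms(2) by simp
  finally have "(fst u * ?i) mod int p = int y" .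
  then show ?thesis using nd by (simp add: proj_point_def)
qed

lemma cross_imp_proportional:
  assumes "nonzero_mod p v" "int p dvd cross u v"
  shows "\<exists>l. int p dvd fst u - l * fst v \<and> int p dvd snd u - l * snd v"
proof (cases "int p dvd snd v")
  case False
  define l where "l = snd u * modular_inverse (int p) (snd v)"
  have "snd u - l * snd v = - (snd u * (snd v * modular_inverse (int p) (snd v) - 1))"
    "fst u - l * fst v = cross u v * modular_inverse (int p) (snd v)
       - fst u * (snd v * modular_inverse (int p) (snd v) - 1)"
    by (simp_all add: l_def cross_def algebra_simps)
  then show ?thesis using modular_inverse_right[OF False] assms(2) by (metis dvd_diff dvd_minus_iff dvd_mult dvd_mult2)
next
  case True
  then have F: "\<not> int p dvd fst v" using assms(1) by (simp add: nonzero_mod_def)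
  define l where "l = fst u * modular_inverse (int p) (fst v)"
  have "fst u - l * fst v = - (fst u * (fst v * modular_inverse (int p) (fst v) - 1))"
    "snd u - l * snd v = - (cross u v * modular_inverse (int p) (fst v))
       - snd u * (fst v * modular_inverse (int p) (fst v) - 1)"
    by (simp_all add: l_def cross_def algebra_simps)
  then show ?thesis using modular_inverse_right[OF F] assms(2) by (metis dvd_diff dvd_minus_iff dvd_mult dvd_mult2)
qed

lemma cross_proportional:
  assumes "int p dvd fst u - l * fst w" "int p dvd snd u - l * snd w" "int p dvd cross w h"
  shows "int p dvd cross u h"
proof -
  have "cross u h = (fst u - l * fst w) * snd h - (snd u - l * snd w) * fst h + l * cross w h"
    by (simp add: cross_def algebra_simps)
  then show ?thesis using assms by simp
qed

lemma nonzero_mod_mat_apply: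
  assumes "mat_invertible M" "nonzero_mod p x"
  shows "nonzero_mod p (mat_apply M x)"
proof -
  obtain a b c d where M: "M = (a, b, c, d)" by (cases M) auto
  obtain x1 x2 where x: "x = (x1, x2)" by (cases x) auto
  show ?thesis
  proof (rule ccontr)
    assume "\<not> nonzero_mod p (mat_apply M x)"
    then have 1: "int p dvd a * x1 + b * x2" and 2: "int p dvd c * x1 + d * x2"
      by (auto simp: nonzero_mod_def M x)
    have "(a * d - b * c) * x1 = d * (a * x1 + b * x2) - b * (c * x1 + d * x2)"
      "(a * d - b * c) * x2 = a * (c * x1 + d * x2) - c * (a * x1 + b * x2)"
      by (simp_all add: algebra_simps)
    then have "int p dvd (a * d - b * c) * x1" "int p dvd (a * d - b * c) * x2"
      using 1 2 by simp_all
    then show False using assms M x by (simp add: dvd_mult_iff nonzero_mod_def)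
  qed
qed

lemma mat_apply_proportional:
  assumes "int p dvd fst u - l * fst w" "int p dvd snd u - l * snd w"
  shows "int p dvd fst (mat_apply M u) - l * fst (mat_apply M w)
    \<and> int p dvd snd (mat_apply M u) - l * snd (mat_apply M w)"
proof -
  obtain a b c d where M: "M = (a, b, c, d)" by (cases M) auto
  obtain x1 x2 where x: "u = (x1, x2)" by (cases u) auto
  obtain y1 y2 where y: "w = (y1, y2)" by (cases w) auto
  have "fst (mat_apply M u) - l * fst (mat_apply M w) = a * (x1 - l * y1) + b * (x2 - l * y2)"
    "snd (mat_apply M u) - l * snd (mat_apply M w) = c * (x1 - l * y1) + d * (x2 - l * y2)"
    by (simp_all add: M x y algebra_simps)
  then show ?thesis using assms x y by simp
qed

lemma mat_invertible_mat_mult: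
  "mat_invertible M \<Longrightarrow> mat_invertible N \<Longrightarrow> mat_invertible (mat_mult M N)"
  by (simp add: mat_det_mat_mult dvd_mult_iff)

lemma mat_invertible_mat_pow: "mat_invertible M \<Longrightarrow> mat_invertible (mat_pow M n)"
  using prime_gt_1_nat[OF prime] by (induction n) (simp_all add: mat_invertible_mat_mult)

lemma moebius_le: "z \<le> p \<Longrightarrow> moebius p M z \<le> p"
  by (simp add: moebius_def proj_point_le)

lemma moebius_mat_mult:
  assumes "mat_invertible M" "mat_invertible N"
  shows "compose {0..p} (moebius p M) (moebius p N) = moebius p (mat_mult M N)"
proof
  fix z
  show "compose {0..p} (moebius p M) (moebius p N) z = moebius p (mat_mult M N) z"
  proof (cases "z \<le> p")
    case False
    then show ?thesis by (simp add: compose_def moebius_def)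
  next
    case True
    let ?x = "mat_apply N (hcoord p z)"
    let ?y = "proj_point p ?x"
    let ?y' = "proj_point p (mat_apply M (hcoord p ?y))"
    have "nonzero_mod p ?x"
      using nonzero_mod_mat_apply[OF assms(2) nonzero_mod_hcoord] .
    then obtain l where "int p dvd fst ?x - l * fst (hcoord p ?y)"
        "int p dvd snd ?x - l * snd (hcoord p ?y)"
      using cross_imp_proportional[OF nonzero_mod_hcoord] cross_proj_point by blast
    then have "int p dvd cross (mat_apply M ?x) (hcoord p ?y')"
      using mat_apply_proportional cross_proportional
        cross_proj_point[OF nonzero_mod_mat_apply[OF assms(1) nonzero_mod_hcoord]] by blast
    then have "?y' = proj_point p (mat_apply (mat_mult M N) (hcoord p z))"
      using proj_point_unique proj_point_le assms mat_invertible_mat_mult nonzero_mod_mat_apply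
        nonzero_mod_hcoord by (simp add: mat_apply_mat_mult)
    then show ?thesis using True proj_point_le by (simp add: compose_def moebius_def)
  qed
qed

lemma moebius_scalar_cong:
  assumes "mat_invertible (a, b, c, d)" "mat_invertible (a', b', c', d')"
    and "int p dvd a - l * a'" "int p dvd b - l * b'" "int p dvd c - l * c'" "int p dvd d - l * d'"
  shows "moebius p (a, b, c, d) = moebius p (a', b', c', d')"
proof
  fix z
  show "moebius p (a, b, c, d) z = moebius p (a', b', c', d') z"
  proof (cases "z \<le> p")
    case False
    then show ?thesis by (simp add: moebius_def)
  next
    case True
    obtain x1 x2 where x: "hcoord p z = (x1, x2)" by (cases "hcoord p z") auto
    let ?u = "mat_apply (a, b, c, d) (x1, x2)" and ?u' = "mat_apply (a', b', c', d') (x1, x2)"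
    have "fst ?u - l * fst ?u' = (a - l * a') * x1 + (b - l * b') * x2"
      "snd ?u - l * snd ?u' = (c - l * c') * x1 + (d - l * d') * x2"
      by (simp_all add: algebra_simps)
    then have "int p dvd fst ?u - l * fst ?u'" "int p dvd snd ?u - l * snd ?u'"
      using assms(3-6) by simp_all
    then have "int p dvd cross ?u (hcoord p (proj_point p ?u'))"
      using cross_proportional cross_proj_point nonzero_mod_mat_apply[OF assms(2)]
        nonzero_mod_hcoord x by metis
    then have "proj_point p ?u' = proj_point p ?u"
      using proj_point_unique[OF _ proj_point_le] nonzero_mod_mat_apply[OF assms(1)]
        nonzero_mod_hcoord x by metis
    then show ?thesis using True x by (simp add: moebius_def)
  qed
qed

lemma moebius_cong:
  assumes "mat_invertible (a, b, c, d)" "mat_invertible (a', b', c', d')"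
    and "int p dvd a - a'" "int p dvd b - b'" "int p dvd c - c'" "int p dvd d - d'"
  shows "moebius p (a, b, c, d) = moebius p (a', b', c', d')"
  using moebius_scalar_cong[OF assms(1,2), of 1] assms(3-6) by simp

lemma moebius_scalar:
  assumes "\<not> int p dvd l"
  shows "moebius p (l, 0, 0, l) = (\<lambda>z\<in>{0..p}. z)"
proof
  fix z
  show "moebius p (l, 0, 0, l) z = (\<lambda>z\<in>{0..p}. z) z"
  proof (cases "z \<le> p")
    case True
    obtain x1 x2 where x: "hcoord p z = (x1, x2)" by (cases "hcoord p z") auto
    have "nonzero_mod p (l * x1, l * x2)"
      using nonzero_mod_hcoord[of z] assms x by (auto simp: nonzero_mod_def dvd_mult_iff)
    moreover have "int p dvd cross (l * x1, l * x2) (hcoord p z)"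
      by (simp add: x cross_def)
    ultimately have "z = proj_point p (l * x1, l * x2)"
      using proj_point_unique True by blast
    then show ?thesis using True x by (simp add: moebius_def)
  qed (simp add: moebius_def)
qed

lemma moebius_one: "moebius p (1, 0, 0, 1) = (\<lambda>z\<in>{0..p}. z)"
  using moebius_scalar not_dvd_one by blast

lemma moebius_perm_moebius:
  assumes "\<not> int p dvd a * d - b * c"
  shows "moebius_perm p a b c d (moebius p (a, b, c, d))"
  unfolding moebius_perm_def
proof
  fix x assume "x \<in> {0..p}"
  moreover obtain x1 x2 where h: "hcoord p x = (x1, x2)" by (cases "hcoord p x") auto
  moreover have "nonzero_mod p (mat_apply (a, b, c, d) (x1, x2))"
    using nonzero_mod_mat_apply[of "(a, b, c, d)", OF _ nonzero_mod_hcoord] assms h by (metis mat_det.simps)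
  then have "int p dvd cross (mat_apply (a, b, c, d) (x1, x2))
      (hcoord p (proj_point p (mat_apply (a, b, c, d) (x1, x2))))"
    by (rule cross_proj_point)
  ultimately show "[(a * fst (hcoord p x) + b * snd (hcoord p x)) * snd (hcoord p (moebius p (a, b, c, d) x)) =
      (c * fst (hcoord p x) + d * snd (hcoord p x)) * fst (hcoord p (moebius p (a, b, c, d) x))] (mod int p)"
    by (simp add: moebius_def cross_def cong_iff_dvd_diff)
qed

lemma moebius_perm_imp_eq:
  assumes "\<not> int p dvd a * d - b * c" "moebius_perm p a b c d \<sigma>" "\<sigma> \<in> Bij {0..p}"
  shows "\<sigma> = moebius p (a, b, c, d)"
proof
  fix z
  show "\<sigma> z = moebius p (a, b, c, d) z"
  proof (cases "z \<le> p")
    case False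
    then show ?thesis
      using Bij_imp_extensional[OF assms(3)] by (simp add: extensional_def moebius_def)
  next
    case True
    obtain x1 x2 where h: "hcoord p z = (x1, x2)" by (cases "hcoord p z") auto
    have n: "nonzero_mod p (mat_apply (a, b, c, d) (x1, x2))"
      using nonzero_mod_mat_apply[of "(a, b, c, d)", OF _ nonzero_mod_hcoord] assms(1) h by (metis mat_det.simps)
    have "\<sigma> z \<le> p" using Bij_imp_funcset[OF assms(3)] True by auto
    moreover have "[(a * x1 + b * x2) * snd (hcoord p (\<sigma> z)) = (c * x1 + d * x2) * fst (hcoord p (\<sigma> z))] (mod int p)"
      using assms(2) True h unfolding moebius_perm_def by force
    then have "int p dvd cross (mat_apply (a, b, c, d) (x1, x2)) (hcoord p (\<sigma> z))"
      by (simp add: cross_def cong_iff_dvd_diff)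
    ultimately have "\<sigma> z = proj_point p (mat_apply (a, b, c, d) (x1, x2))"
      using proj_point_unique[OF n] by blast
    then show ?thesis using True h by (simp add: moebius_def)
  qed
qed

lemma moebius_Bij:
  assumes "mat_invertible M"
  shows "moebius p M \<in> Bij {0..p}"
proof -
  obtain a b c d where M: "M = (a, b, c, d)" by (cases M) auto
  let ?A = "(d, - b, - c, a)"
  have "mat_det ?A = mat_det M" by (simp add: M algebra_simps)
  then have "compose {0..p} (moebius p M) (moebius p ?A) = (\<lambda>z\<in>{0..p}. z)"
    "compose {0..p} (moebius p ?A) (moebius p M) = (\<lambda>z\<in>{0..p}. z)"
    using moebius_mat_mult assms moebius_scalar[OF assms] by (simp_all add: M algebra_simps)
  then have "\<forall>z\<in>{0..p}. moebius p ?A (moebius p M z) = z" "\<forall>z\<in>{0..p}. moebius p M (moebius p ?A z) = z"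
    by (metis (no_types, lifting) compose_eq restrict_apply')+
  then have "bij_betw (moebius p M) {0..p} {0..p}"
    using moebius_le[of _ M] moebius_le[of _ ?A] by (intro bij_betw_byWitness[where f'="moebius p ?A"]) auto
  then show ?thesis unfolding Bij_def by (simp add: moebius_def)
qed

lemma moebius_mat_mult_id_left:
  assumes "mat_invertible A" "mat_invertible M" "moebius p A = (\<lambda>z\<in>{0..p}. z)"
  shows "moebius p (mat_mult A M) = moebius p M"
  using moebius_mat_mult[OF assms(1,2)] assms(3) Id_compose Bij_imp_funcset Bij_imp_extensional
    moebius_Bij[OF assms(2)] by metis

lemma moebius_mat_mult_id_right:
  assumes "mat_invertible M" "mat_invertible A" "moebius p A = (\<lambda>z\<in>{0..p}. z)"
  shows "moebius p (mat_mult M A) = moebius p M"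
  using moebius_mat_mult[OF assms(1,2)] assms(3) compose_Id Bij_imp_funcset Bij_imp_extensional
    moebius_Bij[OF assms(1)] by metis

lemma moebius_sandwich:
  assumes "mat_invertible X" "mat_invertible A" "mat_invertible B" "mat_invertible Y"
    and "moebius p A = moebius p B"
  shows "moebius p (mat_mult X (mat_mult A Y)) = moebius p (mat_mult X (mat_mult B Y))"
  using assms moebius_mat_mult mat_invertible_mat_mult by metis

lemma moebius_mat_pow_cong:
  assumes "mat_invertible M" "mat_invertible N" "moebius p M = moebius p N"
  shows "moebius p (mat_pow M n) = moebius p (mat_pow N n)"
proof (induction n)
  case (Suc n)
  then show ?case
    using moebius_mat_mult mat_invertible_mat_pow assms by (metis mat_pow.simps(2))
qed simp

text \<open>By Cayley--Hamilton, \<open>N\<^sup>3\<close> is scalar when \<open>(tr N)\<^sup>2 = det N\<close>.\<close>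
lemma moebius_cube_eq_id:
  assumes "mat_invertible N" "int p dvd (mat_trace N)\<^sup>2 - mat_det N"
  shows "moebius p (mat_mult (mat_mult N N) N) = (\<lambda>z\<in>{0..p}. z)"
proof -
  obtain a b c d where N: "N = (a, b, c, d)" by (cases N) auto
  define t where "t = a + d"
  define D where "D = a * d - b * c"
  define k where "k = (a + d)\<^sup>2 - (a * d - b * c)"
  have k: "int p dvd k" using assms(2) by (simp add: k_def N)
  have D: "\<not> int p dvd D" using assms(1) by (simp add: D_def N)
  have "\<not> int p dvd t"
  proof
    assume "int p dvd t"
    then have "int p dvd t\<^sup>2" by (simp add: power2_eq_square)
    moreover have "D = t\<^sup>2 - k" by (simp add: k_def t_def D_def)
    ultimately show False using D k by (metis dvd_diff)
  qed
  then have l: "\<not> int p dvd - (t * D)" using D by (simp add: dvd_mult_iff)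
  have cube: "mat_mult (mat_mult N N) N = (k * a - t * D, k * b, k * c, k * d - t * D)"
    unfolding N mat_cube_Cayley_Hamilton k_def t_def D_def ..
  have "mat_invertible (mat_mult (mat_mult N N) N)"
    using assms(1) mat_invertible_mat_mult by blast
  then have "moebius p (k * a - t * D, k * b, k * c, k * d - t * D) = moebius p (1, 0, 0, 1)"
    unfolding cube using k not_dvd_one by (intro moebius_scalar_cong[where l="- (t * D)"]) simp_all
  then show ?thesis unfolding cube using moebius_one by simp
qed

lemma moebius_infinity: "moebius p (a, b, c, d) p = proj_point p (a, c)"
  by (simp add: moebius_def)

lemma moebius_fixes_infinity_iff: "moebius p (a, b, c, d) p = p \<longleftrightarrow> int p dvd c"
  using proj_point_less[of "(a, c)"] by (auto simp: moebius_infinity proj_point_def)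

lemma moebius_eq_id_imp_scalar:
  assumes "mat_invertible (a, b, c, d)" "moebius p (a, b, c, d) = (\<lambda>z\<in>{0..p}. z)"
  shows "int p dvd b \<and> int p dvd c \<and> int p dvd a - d"
proof -
  have p1: "1 < p" using prime_gt_1_nat[OF prime] .
  have fixed: "int p dvd cross (mat_apply (a, b, c, d) (hcoord p z)) (hcoord p z)" if "z \<le> p" for z
  proof -
    have "moebius p (a, b, c, d) z = z" using assms(2) that by simp
    then show ?thesis
      using cross_proj_point[OF nonzero_mod_mat_apply[OF assms(1) nonzero_mod_hcoord], of z] that
      by (simp add: moebius_def)
  qed
  have c: "int p dvd c" using fixed[of p] by (simp add: cross_def)
  have b: "int p dvd b" using fixed[of 0] p1 by (simp add: hcoord_def cross_def)
  have "int p dvd a + b - (c + d)" using fixed[of 1] p1 by (simp add: hcoord_def cross_def)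
  moreover have "a - d = (a + b - (c + d)) - b + c" by simp
  ultimately show ?thesis using b c by (metis dvd_add dvd_diff)
qed

lemma moebius_translation:
  "z \<le> p \<Longrightarrow> moebius p (1, e, 0, 1) z = (if z = p then p else nat ((int z + e) mod int p))"
  using prime_gt_1_nat[OF prime] by (auto simp: moebius_def proj_point_def hcoord_def)

lemma moebius_idempotent:
  assumes "mat_invertible M" "compose {0..p} (moebius p M) (moebius p M) = moebius p M"
  shows "moebius p M = (\<lambda>z\<in>{0..p}. z)"
proof
  fix z
  have inj: "inj_on (moebius p M) {0..p}"
    using moebius_Bij[OF assms(1)] by (simp add: Bij_def bij_betw_def)
  show "moebius p M z = (\<lambda>z\<in>{0..p}. z) z"
  proof (cases "z \<le> p")
    case True
    have "moebius p M (moebius p M z) = moebius p M z"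
      using fun_cong[OF assms(2), of z] True by (simp add: compose_def)
    then have "moebius p M z = z" using inj True moebius_le[OF True] by (simp add: inj_on_def)
    then show ?thesis using True by simp
  qed (simp add: moebius_def)
qed

end

section \<open>Permutation groups\<close>

lemma mult_BijGroup: "g \<in> Bij X \<Longrightarrow> h \<in> Bij X \<Longrightarrow> g \<otimes>\<^bsub>BijGroup X\<^esub> h = compose X g h"
  by (simp add: BijGroup_def)

lemma one_perm_group: "\<one>\<^bsub>perm_group X H\<^esub> = (\<lambda>x\<in>X. x)"
  by (simp add: perm_group_def BijGroup_def)

lemma carrier_perm_group [simp]: "carrier (perm_group X H) = H"
  by (simp add: perm_group_def)

lemma finite_Bij: "finite X \<Longrightarrow> finite (Bij X)"
proof -
  assume "finite X"
  then have "finite (PiE X (\<lambda>_. X))" by (simp add: finite_PiE)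
  moreover have "Bij X \<subseteq> PiE X (\<lambda>_. X)" by (auto simp: Bij_def bij_betw_def PiE_def Pi_def)
  ultimately show ?thesis by (rule finite_subset[rotated])
qed

locale perm_subgroup =
  fixes V :: "'v set" and G :: "('v \<Rightarrow> 'v) set"
  assumes subgroup: "subgroup G (BijGroup V)"
begin

lemma mem_Bij: "g \<in> G \<Longrightarrow> g \<in> Bij V"
  using subgroup.subset[OF subgroup] by (fastforce simp: BijGroup_def)

lemma apply_mem: "g \<in> G \<Longrightarrow> x \<in> V \<Longrightarrow> g x \<in> V"
  using Bij_imp_funcset[OF mem_Bij] by fastforce

lemma group: "group (perm_group V G)"
  unfolding perm_group_def by (rule subgroup.subgroup_is_group[OF subgroup group_BijGroup])

lemma mult_eq: "g \<in> G \<Longrightarrow> h \<in> G \<Longrightarrow> g \<otimes>\<^bsub>perm_group V G\<^esub> h = compose V g h"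
  using mem_Bij by (simp add: perm_group_def BijGroup_def)

lemma compose_mem: "g \<in> G \<Longrightarrow> h \<in> G \<Longrightarrow> compose V g h \<in> G"
  using subgroup.m_closed[OF subgroup] mem_Bij by (metis mult_BijGroup)

lemma id_mem: "(\<lambda>x\<in>V. x) \<in> G"
  using subgroup.one_closed[OF subgroup] by (simp add: BijGroup_def)

lemma eqI: "g \<in> G \<Longrightarrow> h \<in> G \<Longrightarrow> (\<And>x. x \<in> V \<Longrightarrow> g x = h x) \<Longrightarrow> g = h"
  using mem_Bij Bij_imp_extensional extensionalityI by metis

lemma inverse:
  assumes "g \<in> G"
  shows "\<exists>g'\<in>G. \<forall>x\<in>V. g' (g x) = x \<and> g (g' x) = x"
proof -
  let ?i = "inv\<^bsub>perm_group V G\<^esub> g"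
  have i: "?i \<in> G" using group.inv_closed[OF group] assms by simp
  have "compose V ?i g = (\<lambda>x\<in>V. x)" "compose V g ?i = (\<lambda>x\<in>V. x)"
    using group.l_inv[OF group] group.r_inv[OF group] assms i mult_eq[OF i assms] mult_eq[OF assms i]
    by (simp_all add: one_perm_group)
  then have "\<forall>x\<in>V. ?i (g x) = x \<and> g (?i x) = x" by (metis compose_eq restrict_apply')
  then show ?thesis using i by blast
qed

lemma finite_group: "finite V \<Longrightarrow> finite G"
  using finite_subset[OF _ finite_Bij] mem_Bij by blast

lemma action: "group_action (perm_group V G) V (\<lambda>g. g)"
  unfolding group_action_def group_hom_def group_hom_axioms_def
  using group group_BijGroup mem_Bij
  by (auto simp: hom_def mult_eq mult_BijGroup BijGroup_def)

lemma stabilizer_subgroup: "x \<in> V \<Longrightarrow> subgroup {g \<in> G. g x = x} (BijGroup V)"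
  using group_action.stabilizer_subgroup[OF action] group.incl_subgroup[OF group_BijGroup subgroup]
  by (simp add: stabilizer_def perm_group_def)

lemma card_orbit_mult_card_stabilizer:
  "x \<in> V \<Longrightarrow> card {g x | g. g \<in> G} * card {g \<in> G. g x = x} = card G"
  using group_action.orbit_stabilizer_theorem[OF action]
  by (simp add: orbit_def stabilizer_def order_def)

lemma power_mem: "g \<in> G \<Longrightarrow> g [^]\<^bsub>BijGroup V\<^esub> (n::nat) \<in> G"
  using group.is_monoid[OF group] monoid.nat_pow_closed[of "perm_group V G"]
    monoid.nat_pow_consistent[OF group.is_monoid[OF group_BijGroup]]
  by (metis carrier_perm_group perm_group_def)

lemma power_Suc: "g \<in> G \<Longrightarrow> g [^]\<^bsub>BijGroup V\<^esub> Suc n = compose V (g [^]\<^bsub>BijGroup V\<^esub> n) g"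
  using power_mem mem_Bij by (simp add: mult_BijGroup)

lemma power_0: "g [^]\<^bsub>BijGroup V\<^esub> (0::nat) = (\<lambda>x\<in>V. x)"
  by (simp add: BijGroup_def)

lemma power_two: "g \<in> G \<Longrightarrow> g [^]\<^bsub>BijGroup V\<^esub> (2::nat) = compose V g g"
proof -
  assume g: "g \<in> G"
  have "g [^]\<^bsub>BijGroup V\<^esub> Suc (Suc 0) = compose V (compose V (\<lambda>x\<in>V. x) g) g"
    unfolding power_Suc[OF g] power_0 ..
  also have "compose V (\<lambda>x\<in>V. x) g = g"
    by (rule Id_compose[OF Bij_imp_funcset Bij_imp_extensional]) (use mem_Bij[OF g] in simp_all)
  finally show ?thesis by (simp add: numeral_2_eq_2)
qed

lemma compose_cancel_right:
  assumes "g \<in> G" "g' \<in> G" "h \<in> G" "compose V g h = compose V g' h"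
  shows "g = g'"
proof (rule eqI[OF assms(1,2)])
  fix y assume y: "y \<in> V"
  obtain h' where h': "h' \<in> G" "\<forall>x\<in>V. h' (h x) = x \<and> h (h' x) = x" using inverse[OF assms(3)] by blast
  have "h' y \<in> V" "h (h' y) = y" using h' y apply_mem by auto
  moreover have "compose V g h (h' y) = compose V g' h (h' y)" using assms(4) by simp
  ultimately show "g y = g' y" by (simp add: compose_eq)
qed

lemma card_stabilizer_transitive:
  assumes "v \<in> V" "\<And>u. u \<in> V \<Longrightarrow> \<exists>g\<in>G. g v = u"
  shows "card V * card {g \<in> G. g v = v} = card G"
proof -
  have "{g v | g. g \<in> G} = V" using assms apply_mem by blast
  then show ?thesis using card_orbit_mult_card_stabilizer[OF assms(1)] by simp
qed

lemma prime_order_subgroup: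
  assumes "finite V" "prime q" "q dvd card G"
  shows "\<exists>P. subgroup P (BijGroup V) \<and> P \<subseteq> G \<and> card P = q"
proof -
  obtain m where "card G = q * m" using assms(3) by blast
  then obtain P where P: "subgroup P (perm_group V G)" "card P = q"
    using sylow_thm[OF assms(2) group, of 1 m] finite_group[OF assms(1)] by (auto simp: order_def)
  have "subgroup P (BijGroup V)"
    using group.incl_subgroup[OF group_BijGroup subgroup] P(1) by (simp add: perm_group_def)
  moreover have "P \<subseteq> G" using subgroup.subset[OF P(1)] by simp
  ultimately show ?thesis using P(2) by blast
qed

lemma prime_order_element:
  assumes "subgroup P (BijGroup V)" "card P = q" "prime q"
  shows "\<exists>g\<in>P. g \<noteq> (\<lambda>x\<in>V. x) \<and> g [^]\<^bsub>BijGroup V\<^esub> q = (\<lambda>x\<in>V. x)"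
proof -
  interpret P: perm_subgroup V P by (rule perm_subgroup.intro[OF assms(1)])
  have "\<not> P \<subseteq> {\<lambda>x\<in>V. x}"
  proof
    assume "P \<subseteq> {\<lambda>x\<in>V. x}"
    then have "card P \<le> 1" using card_mono[of "{\<lambda>x\<in>V. x}" P] by simp
    then show False using assms(2) prime_gt_1_nat[OF assms(3)] by simp
  qed
  then obtain g where g: "g \<in> P" "g \<noteq> (\<lambda>x\<in>V. x)" by blast
  have "g [^]\<^bsub>perm_group V P\<^esub> q = \<one>\<^bsub>perm_group V P\<^esub>"
    using group.pow_order_eq_1[OF P.group] g(1) assms(2) by (simp add: order_def)
  moreover have "g [^]\<^bsub>perm_group V P\<^esub> q = g [^]\<^bsub>BijGroup V\<^esub> q"
    unfolding perm_group_def by (rule monoid.nat_pow_consistent[OF group.is_monoid[OF group_BijGroup], symmetric])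
  ultimately have "g [^]\<^bsub>BijGroup V\<^esub> q = (\<lambda>x\<in>V. x)" by (simp add: one_perm_group)
  then show ?thesis using g by blast
qed

end

lemma (in group_action) prime_order_fixed_point:
  assumes "prime p" "order G = p" "finite E" "\<not> p dvd card E"
  shows "\<exists>x\<in>E. \<forall>g\<in>carrier G. \<phi> g x = x"
proof -
  have orbit_card: "card orb = 1 \<or> card orb = p" if orb: "orb \<in> orbits G E \<phi>" for orb
  proof -
    obtain x where x: "x \<in> E" "orb = orbit G \<phi> x" using orb unfolding orbits_def by blast
    have "card orb * card (stabilizer G \<phi> x) = p"
      using orbit_stabilizer_theorem[OF x(1)] x(2) assms(2) by simp
    then show ?thesis using assms(1) by (metis dvd_triv_left prime_nat_iff)
  qed
  have "\<exists>orb\<in>orbits G E \<phi>. card orb = 1"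
  proof (rule ccontr)
    assume "\<not> ?thesis"
    then have "(\<Sum>orb\<in>orbits G E \<phi>. card orb) = (\<Sum>orb\<in>orbits G E \<phi>. p)"
      using orbit_card by (intro sum.cong) auto
    moreover have "(\<Sum>orb\<in>orbits G E \<phi>. card orb) = card E"
      using disjoint_sum[OF assms(3), of "\<lambda>_. 1::nat"] by simp
    ultimately have "card E = p * card (orbits G E \<phi>)" by simp
    then show False using assms(4) by simp
  qed
  then obtain x where x: "x \<in> E" "card (orbit G \<phi> x) = 1" unfolding orbits_def by blast
  then have "orbit G \<phi> x = {x}" using orbit_refl[OF x(1)] by (metis card_1_singletonE singletonD)
  then show ?thesis using x(1) by (auto simp: orbit_def)
qed

section \<open>The groups PGL(2, p) and PSL(2, p)\<close>

context prime_modulus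
begin

lemma moebius_mem_PGL2:
  assumes "mat_invertible M"
  shows "moebius p M \<in> carrier (PGL2 p)"
proof -
  obtain a b c d where M: "M = (a, b, c, d)" by (cases M) auto
  then have "moebius_perm p a b c d (moebius p M)" "\<not> [a * d - b * c = 0] (mod int p)"
    using moebius_perm_moebius assms by (simp_all add: cong_0_iff)
  then show ?thesis
    using moebius_Bij[OF assms] unfolding PGL2_def perm_group_def by auto
qed

lemma carrier_PGL2: "carrier (PGL2 p) = {moebius p M | M. mat_invertible M}"
proof
  show "carrier (PGL2 p) \<subseteq> {moebius p M | M. mat_invertible M}"
  proof
    fix \<sigma> assume "\<sigma> \<in> carrier (PGL2 p)"
    then obtain a b c d where s: "\<sigma> \<in> Bij {0..p}" "\<not> [a * d - b * c = 0] (mod int p)"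
      "moebius_perm p a b c d \<sigma>"
      unfolding PGL2_def perm_group_def by auto
    then have s2: "\<not> int p dvd a * d - b * c" by (simp add: cong_0_iff)
    then have "\<sigma> = moebius p (a, b, c, d)" using moebius_perm_imp_eq[OF s2 s(3,1)] by blast
    then show "\<sigma> \<in> {moebius p M | M. mat_invertible M}" using s2 by fastforce
  qed
  show "{moebius p M | M. mat_invertible M} \<subseteq> carrier (PGL2 p)"
    using moebius_mem_PGL2 by blast
qed

lemma carrier_PSL2:
  assumes "\<sigma> \<in> carrier (PSL2 p)"
  shows "\<exists>M. mat_invertible M \<and> int p dvd mat_det M - 1 \<and> \<sigma> = moebius p M"
proof -
  obtain a b c d where s: "\<sigma> \<in> Bij {0..p}" "[a * d - b * c = 1] (mod int p)" "moebius_perm p a b c d \<sigma>"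
    using assms unfolding PSL2_def perm_group_def by auto
  then have s2: "int p dvd a * d - b * c - 1" by (simp add: cong_iff_dvd_diff)
  have inv: "\<not> int p dvd a * d - b * c"
  proof
    assume "int p dvd a * d - b * c"
    then have "int p dvd 1" using dvd_diff[OF _ s2] by fastforce
    then show False using not_dvd_one by simp
  qed
  then have "\<sigma> = moebius p (a, b, c, d)" using moebius_perm_imp_eq s(3,1) by blast
  then show ?thesis using s2 inv by fastforce
qed

lemma PGL2_subgroup: "subgroup (carrier (PGL2 p)) (BijGroup {0..p})"
proof (rule group.subgroupI[OF group_BijGroup])
  show "carrier (PGL2 p) \<subseteq> carrier (BijGroup {0..p})"
    by (auto simp: PGL2_def perm_group_def BijGroup_def)
  show "carrier (PGL2 p) \<noteq> {}" using moebius_mem_PGL2[of "(1, 0, 0, 1)"] not_dvd_one by auto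
next
  fix \<sigma> assume "\<sigma> \<in> carrier (PGL2 p)"
  then obtain M where M: "mat_invertible M" "\<sigma> = moebius p M" unfolding carrier_PGL2 by blast
  obtain a b c d where abcd: "M = (a, b, c, d)" by (cases M) auto
  define A where "A = (d, - b, - c, a)"
  have A: "mat_invertible A" using M(1) abcd by (simp add: A_def algebra_simps)
  have "compose {0..p} (moebius p A) \<sigma> = moebius p (mat_mult A M)"
    using moebius_mat_mult[OF A M(1)] M(2) by simp
  also have "mat_mult A M = (mat_det M, 0, 0, mat_det M)" by (simp add: A_def abcd algebra_simps)
  also have "moebius p (mat_det M, 0, 0, mat_det M) = (\<lambda>z\<in>{0..p}. z)" using moebius_scalar M(1) by simp
  finally have "moebius p A \<otimes>\<^bsub>BijGroup {0..p}\<^esub> \<sigma> = \<one>\<^bsub>BijGroup {0..p}\<^esub>"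
    using M moebius_Bij A by (simp add: mult_BijGroup BijGroup_def)
  then have "inv\<^bsub>BijGroup {0..p}\<^esub> \<sigma> = moebius p A"
    using M moebius_Bij A by (intro group.inv_equality[OF group_BijGroup]) (simp_all add: BijGroup_def)
  then show "inv\<^bsub>BijGroup {0..p}\<^esub> \<sigma> \<in> carrier (PGL2 p)" using moebius_mem_PGL2[OF A] by simp
next
  fix \<sigma> \<tau> assume "\<sigma> \<in> carrier (PGL2 p)" "\<tau> \<in> carrier (PGL2 p)"
  then obtain M N where MN: "mat_invertible M" "\<sigma> = moebius p M" "mat_invertible N" "\<tau> = moebius p N"
    unfolding carrier_PGL2 by blast
  then have "\<sigma> \<otimes>\<^bsub>BijGroup {0..p}\<^esub> \<tau> = moebius p (mat_mult M N)"
    using moebius_mat_mult moebius_Bij by (simp add: mult_BijGroup)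
  then show "\<sigma> \<otimes>\<^bsub>BijGroup {0..p}\<^esub> \<tau> \<in> carrier (PGL2 p)"
    using moebius_mem_PGL2 mat_invertible_mat_mult MN by simp
qed

lemma infinity_stabilizer_PGL2:
  "{\<sigma> \<in> carrier (PGL2 p). \<sigma> p = p} = (\<lambda>(a, b). moebius p (int a, int b, 0, 1)) ` ({1..<p} \<times> {..<p})"
proof
  show "{\<sigma> \<in> carrier (PGL2 p). \<sigma> p = p} \<subseteq> (\<lambda>(a, b). moebius p (int a, int b, 0, 1)) ` ({1..<p} \<times> {..<p})"
  proof
    fix \<sigma> assume s: "\<sigma> \<in> {\<sigma> \<in> carrier (PGL2 p). \<sigma> p = p}"
    then obtain M where "mat_invertible M" "\<sigma> = moebius p M" unfolding carrier_PGL2 by blast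
    moreover obtain a b c d where "M = (a, b, c, d)" by (cases M) auto
    ultimately have M: "mat_invertible (a, b, c, d)" "\<sigma> = moebius p (a, b, c, d)" by simp_all
    have c: "int p dvd c" using s M moebius_fixes_infinity_iff by simp
    then have ud: "\<not> int p dvd d" and ua: "\<not> int p dvd a" using M(1) by auto
    define i where "i = modular_inverse (int p) d"
    define a' where "a' = (a * i) mod int p"
    define b' where "b' = (b * i) mod int p"
    have a'b': "0 \<le> a'" "a' < int p" "0 \<le> b'" "b' < int p"
      using int_p_pos by (simp_all add: a'_def b'_def)
    have "a - d * a' = - (d * (a' - a * i)) - a * (d * i - 1)"
      "b - d * b' = - (d * (b' - b * i)) - b * (d * i - 1)" by (simp_all add: algebra_simps)
    moreover have "int p dvd a' - a * i" "int p dvd b' - b * i"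
      by (simp_all add: a'_def b'_def mod_eq_dvd_iff[symmetric])
    ultimately have da: "int p dvd a - d * a'" and db: "int p dvd b - d * b'"
      using modular_inverse_right[OF ud] unfolding i_def by simp_all
    have ua': "\<not> int p dvd a'"
      using da ua by (metis dvd_diff_commute dvd_add_right_iff diff_add_cancel dvd_mult)
    have "moebius p (a, b, c, d) = moebius p (a', b', 0, 1)"
      using M(1) ua' c da db by (intro moebius_scalar_cong[where l=d]) (simp_all add: dvd_diff_commute[of _ d])
    moreover have "a' \<noteq> 0" using ua' by auto
    ultimately have "\<sigma> = (\<lambda>(a, b). moebius p (int a, int b, 0, 1)) (nat a', nat b')" using M a'b' by simp
    moreover have "(nat a', nat b') \<in> {1..<p} \<times> {..<p}" using a'b' \<open>a' \<noteq> 0\<close> by auto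
    ultimately show "\<sigma> \<in> (\<lambda>(a, b). moebius p (int a, int b, 0, 1)) ` ({1..<p} \<times> {..<p})" by (rule image_eqI)
  qed
  show "(\<lambda>(a, b). moebius p (int a, int b, 0, 1)) ` ({1..<p} \<times> {..<p}) \<subseteq> {\<sigma> \<in> carrier (PGL2 p). \<sigma> p = p}"
  proof -
    have "moebius p (int a, int b, 0, 1) \<in> {\<sigma> \<in> carrier (PGL2 p). \<sigma> p = p}" if "1 \<le> a" "a < p" for a b
    proof -
      have "\<not> int p dvd int a" using that by (auto simp: zdvd_not_zless)
      then show ?thesis using moebius_mem_PGL2 moebius_fixes_infinity_iff by simp
    qed
    then show ?thesis by auto
  qed
qed

lemma card_PGL2: "card (carrier (PGL2 p)) = p * (p\<^sup>2 - 1)"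
proof -
  interpret PGL2: perm_subgroup "{0..p}" "carrier (PGL2 p)"
    by (rule perm_subgroup.intro[OF PGL2_subgroup])
  have p1: "1 < p" using prime_gt_1_nat[OF prime] .
  have orbit: "{\<sigma> p | \<sigma>. \<sigma> \<in> carrier (PGL2 p)} = {0..p}"
  proof (intro equalityI subsetI)
    fix y assume y: "y \<in> {0..p}"
    have "\<exists>M. mat_invertible M \<and> moebius p M p = y"
    proof (cases "y = p")
      case True
      then have "mat_invertible (1, 0, 0, 1) \<and> moebius p (1, 0, 0, 1) p = y"
        using not_dvd_one moebius_fixes_infinity_iff[of 1 0 0 1] by simp
      then show ?thesis by blast
    next
      case False
      then have "moebius p (int y, - 1, 1, 0) p = y"
        using y p1 by (simp add: moebius_infinity proj_point_def)
      moreover have "mat_invertible (int y, - 1, 1, 0)" using not_dvd_one by simp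
      ultimately show ?thesis by blast
    qed
    then show "y \<in> {\<sigma> p | \<sigma>. \<sigma> \<in> carrier (PGL2 p)}" using moebius_mem_PGL2 by blast
  next
    fix y assume "y \<in> {\<sigma> p | \<sigma>. \<sigma> \<in> carrier (PGL2 p)}"
    then show "y \<in> {0..p}" using PGL2.apply_mem[of _ p] by auto
  qed
  have "inj_on (\<lambda>(a, b). moebius p (int a, int b, 0, 1)) ({1..<p} \<times> {..<p})"
  proof (rule inj_onI)
    fix x y assume x: "x \<in> {1..<p} \<times> {..<p}" and y: "y \<in> {1..<p} \<times> {..<p}"
      and xy: "(\<lambda>(a, b). moebius p (int a, int b, 0, 1)) x = (\<lambda>(a, b). moebius p (int a, int b, 0, 1)) y"
    obtain a b a' b' where ab: "x = (a, b)" "y = (a', b')" by fastforce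
    have r: "a < p" "b < p" "a' < p" "b' < p" using x y ab by auto
    have e: "moebius p (int a, int b, 0, 1) = moebius p (int a', int b', 0, 1)" using xy ab by simp
    have "moebius p (int a, int b, 0, 1) 0 = b" "moebius p (int a', int b', 0, 1) 0 = b'"
      using r p1 by (simp_all add: moebius_def proj_point_def hcoord_def)
    then have bb: "b = b'" using e by simp
    have "moebius p (int a, int b, 0, 1) 1 = nat ((int a + int b) mod int p)"
      "moebius p (int a', int b', 0, 1) 1 = nat ((int a' + int b') mod int p)"
      using r p1 by (simp_all add: moebius_def proj_point_def hcoord_def)
    then have "nat ((int a + int b) mod int p) = nat ((int a' + int b) mod int p)"
      using e bb by simp
    then have "(int a + int b) mod int p = (int a' + int b) mod int p"
      using int_p_pos by (simp add: eq_nat_nat_iff)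
    then have "int p dvd (int a - int a') * 1" by (simp add: mod_eq_dvd_iff)
    then show "x = y" using mod_residue_eq[OF r(1,3)] not_dvd_one bb ab by blast
  qed
  then have "card {\<sigma> \<in> carrier (PGL2 p). \<sigma> p = p} = (p - 1) * p"
    unfolding infinity_stabilizer_PGL2 by (subst card_image) simp_all
  moreover have "card {\<sigma> p | \<sigma>. \<sigma> \<in> carrier (PGL2 p)} = p + 1" unfolding orbit by simp
  ultimately have "card (carrier (PGL2 p)) = (p + 1) * ((p - 1) * p)"
    using PGL2.card_orbit_mult_card_stabilizer[of p] by simp
  also have "\<dots> = p * ((p + 1) * (p - 1))" by (simp only: ac_simps)
  also have "(p + 1) * (p - 1) = p\<^sup>2 - 1" by (simp add: power2_eq_square algebra_simps)
  finally show ?thesis .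
qed

end

section \<open>Graphs\<close>

lemma complete_graph_has_triangle:
  assumes "is_complete_graph V E n" "3 \<le> n"
  shows "has_triangle V E"
proof -
  have "finite V" "card V \<ge> 3" using assms card.infinite by (fastforce simp: is_complete_graph_def)+
  then obtain S where "S \<subseteq> V" "card S = 3" by (meson obtain_subset_with_card_n)
  then obtain x y z where "x \<in> V" "y \<in> V" "z \<in> V" "x \<noteq> y" "y \<noteq> z" "x \<noteq> z"
    unfolding card_3_iff by blast
  then show ?thesis using assms(1) unfolding has_triangle_def is_complete_graph_def by blast
qed

lemma valency_has_neighbour:
  assumes "valency V E k" "0 < k" "v \<in> V"
  shows "\<exists>w. E v w"
proof -
  have "card {w \<in> V. E v w} \<noteq> 0" using assms by (simp add: valency_def)
  then obtain w where "w \<in> {w \<in> V. E v w}" by (metis card.empty all_not_in_conv)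
  then show ?thesis by blast
qed

lemma arc_transitive_vertex_transitive:
  assumes "simple_graph V E" "valency V E k" "0 < k" "arc_transitive V E G" "u \<in> V" "v \<in> V"
  shows "\<exists>g\<in>G. g u = v"
proof -
  obtain u' v' where "E u u'" "E v v'" using valency_has_neighbour assms(2,3,5,6) by metis
  then have "(u, u') \<in> arcs V E" "(v, v') \<in> arcs V E"
    using assms(1) by (auto simp: arcs_def simple_graph_def)
  then show ?thesis using assms(4) unfolding arc_transitive_def by fastforce
qed

lemma has_triangle_order_three_aut:
  assumes "simple_graph V E" "g \<in> graph_aut V E" "v \<in> V" "E v (g v)" "g (g (g v)) = v"
  shows "has_triangle V E"
proof -
  have g: "g \<in> Bij V" "\<And>x y. x \<in> V \<Longrightarrow> y \<in> V \<Longrightarrow> E x y \<longleftrightarrow> E (g x) (g y)"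
    using assms(2) by (auto simp: graph_aut_def)
  have V: "g v \<in> V" "g (g v) \<in> V" using Bij_imp_funcset[OF g(1)] assms(3) by auto
  have e1: "E (g v) (g (g v))" using g(2)[OF assms(3) V(1)] assms(4) by blast
  have "E (g (g v)) v" using g(2)[OF V] e1 assms(5) by simp
  moreover have "\<And>x y. E x y \<Longrightarrow> E y x \<and> x \<noteq> y" using assms(1) unfolding simple_graph_def by metis
  ultimately show ?thesis
    using assms(3,4) V e1 unfolding has_triangle_def by metis
qed

context perm_subgroup
begin

lemma stabilizer_order_dvd_valency:
  assumes "simple_graph V E" "valency V E k" "G \<subseteq> graph_aut V E" "arc_transitive V E G"
    and "v \<in> V" "E v w"
  shows "card {g \<in> G. g v = v} = k * card {g \<in> G. g v = v \<and> g w = w}"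
proof -
  interpret stab: perm_subgroup V "{g \<in> G. g v = v}"
    by (rule perm_subgroup.intro[OF stabilizer_subgroup[OF assms(5)]])
  have w: "w \<in> V" using assms(1,6) by (simp add: simple_graph_def)
  have "{g w | g. g \<in> {g \<in> G. g v = v}} = {u \<in> V. E v u}"
  proof (intro equalityI subsetI)
    fix u assume "u \<in> {g w | g. g \<in> {g \<in> G. g v = v}}"
    then obtain g where "g \<in> G" "g v = v" "u = g w" by blast
    then show "u \<in> {u \<in> V. E v u}"
      using assms(3,5,6) w apply_mem by (force simp: graph_aut_def)
  next
    fix u assume "u \<in> {u \<in> V. E v u}"
    then have "(v, w) \<in> arcs V E" "(v, u) \<in> arcs V E" using assms(6) w assms(5) by (auto simp: arcs_def)
    then obtain g where "g \<in> G" "g v = v" "g w = u" using assms(4) unfolding arc_transitive_def by fastforce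
    then show "u \<in> {g w | g. g \<in> {g \<in> G. g v = v}}" by blast
  qed
  moreover have "{g \<in> {g \<in> G. g v = v}. g w = w} = {g \<in> G. g v = v \<and> g w = w}" by auto
  ultimately show ?thesis
    using stab.card_orbit_mult_card_stabilizer[OF w] assms(2,5) by (simp add: valency_def)
qed

lemma transitive_if_contains_neighbour_movers:
  assumes "graph_connected V E" "G \<subseteq> graph_aut V E" "v \<in> V" "\<And>u. u \<in> V \<Longrightarrow> \<exists>g\<in>G. g v = u"
    and "H \<subseteq> G" "(\<lambda>x\<in>V. x) \<in> H" "\<And>g h. g \<in> H \<Longrightarrow> h \<in> H \<Longrightarrow> compose V g h \<in> H"
    and "\<And>x. x \<in> G \<Longrightarrow> E v (x v) \<Longrightarrow> x \<in> H"
    and "u \<in> V"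
  shows "\<exists>h\<in>H. h v = u"
proof -
  have "(v, u) \<in> {(x, y). x \<in> V \<and> y \<in> V \<and> E x y}\<^sup>*"
    using assms(1,3,9) by (simp add: graph_connected_def)
  then show ?thesis
  proof (induction rule: rtrancl_induct)
    case base
    then show ?case using assms(3,6) by (metis restrict_apply')
  next
    case (step u u')
    then have uu': "u \<in> V" "u' \<in> V" "E u u'" by auto
    obtain h where h: "h \<in> H" "h v = u" using step.IH by blast
    obtain z where z: "z \<in> G" "z v = u'" using assms(4)[OF uu'(2)] by blast
    obtain h' where h': "h' \<in> G" "\<forall>x\<in>V. h' (h x) = x \<and> h (h' x) = x" using inverse h assms(5) by blast
    have "E (h' u) (h' u')" using assms(2) h'(1) uu' by (auto simp: graph_aut_def)
    moreover have "h' u = v" using h h'(2) assms(3) by metis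
    ultimately have "E v (compose V h' z v)" using h h'(2) z assms(3) by (simp add: compose_eq)
    then have "compose V h' z \<in> H" using assms(8) compose_mem h'(1) z(1) by blast
    moreover have "z = compose V h (compose V h' z)"
      using h h' z assms(5) compose_mem apply_mem by (intro eqI) (auto simp: compose_eq)
    ultimately show ?case using assms(7) h(1) z(2) by metis
  qed
qed

end

section \<open>Representations by Moebius transformations\<close>

text \<open>A faithful representation of \<open>G\<close> in \<open>PGL\<^sub>2(p)\<close>, given by a choice of matrices.\<close>
locale moebius_rep = prime_modulus p + perm_subgroup V G
  for p :: nat and V :: "'v set" and G :: "('v \<Rightarrow> 'v) set" +
  fixes \<rho> :: "('v \<Rightarrow> 'v) \<Rightarrow> mat"
  assumes rep_invertible: "g \<in> G \<Longrightarrow> mat_invertible (\<rho> g)"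
    and rep_mult: "g \<in> G \<Longrightarrow> h \<in> G \<Longrightarrow> moebius p (\<rho> (compose V g h)) = moebius p (mat_mult (\<rho> g) (\<rho> h))"
    and rep_inj: "g \<in> G \<Longrightarrow> h \<in> G \<Longrightarrow> moebius p (\<rho> g) = moebius p (\<rho> h) \<Longrightarrow> g = h"
begin

lemma rep_compose:
  "g \<in> G \<Longrightarrow> h \<in> G \<Longrightarrow>
    moebius p (\<rho> (compose V g h)) = compose {0..p} (moebius p (\<rho> g)) (moebius p (\<rho> h))"
  using rep_mult moebius_mat_mult rep_invertible by simp

lemma rep_compose_apply:
  "g \<in> G \<Longrightarrow> h \<in> G \<Longrightarrow> z \<le> p \<Longrightarrow>
    moebius p (\<rho> (compose V g h)) z = moebius p (\<rho> g) (moebius p (\<rho> h) z)"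
  using rep_compose by (simp add: compose_def)

lemma rep_le: "z \<le> p \<Longrightarrow> moebius p (\<rho> g) z \<le> p"
  by (rule moebius_le)

lemma rep_id: "moebius p (\<rho> (\<lambda>x\<in>V. x)) = (\<lambda>z\<in>{0..p}. z)"
proof -
  have "compose V (\<lambda>x\<in>V. x) (\<lambda>x\<in>V. x) = (\<lambda>x\<in>V. x)" by (auto simp: compose_def)
  then show ?thesis
    using rep_compose[OF id_mem id_mem] moebius_idempotent rep_invertible[OF id_mem] by simp
qed

lemma rep_eq_id_imp: "g \<in> G \<Longrightarrow> moebius p (\<rho> g) = (\<lambda>z\<in>{0..p}. z) \<Longrightarrow> g = (\<lambda>x\<in>V. x)"
  using rep_inj[OF _ id_mem] rep_id by simp

lemma rep_power:
  assumes "g \<in> G"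
  shows "moebius p (\<rho> (g [^]\<^bsub>BijGroup V\<^esub> n)) = moebius p (mat_pow (\<rho> g) n)"
proof (induction n)
  case 0
  then show ?case by (simp only: power_0 mat_pow.simps rep_id moebius_one)
next
  case (Suc n)
  have "moebius p (\<rho> (g [^]\<^bsub>BijGroup V\<^esub> Suc n))
      = compose {0..p} (moebius p (\<rho> (g [^]\<^bsub>BijGroup V\<^esub> n))) (moebius p (\<rho> g))"
    using rep_compose[OF power_mem[OF assms] assms] power_Suc[OF assms] by metis
  also have "\<dots> = moebius p (mat_mult (mat_pow (\<rho> g) n) (\<rho> g))"
    using Suc.IH moebius_mat_mult mat_invertible_mat_pow rep_invertible[OF assms] by simp
  finally show ?case by simp
qed

lemma rep_action:
  assumes "subgroup P (BijGroup V)" "P \<subseteq> G"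
  shows "group_action (perm_group V P) {0..p} (\<lambda>g. moebius p (\<rho> g))"
proof -
  interpret P: perm_subgroup V P by (rule perm_subgroup.intro[OF assms(1)])
  have "(\<lambda>g. moebius p (\<rho> g)) \<in> hom (perm_group V P) (BijGroup {0..p})"
  proof (rule homI)
    fix g h assume "g \<in> carrier (perm_group V P)" "h \<in> carrier (perm_group V P)"
    then have "g \<in> P" "h \<in> P" "g \<in> G" "h \<in> G" using assms(2) by auto
    then show "moebius p (\<rho> (g \<otimes>\<^bsub>perm_group V P\<^esub> h))
        = moebius p (\<rho> g) \<otimes>\<^bsub>BijGroup {0..p}\<^esub> moebius p (\<rho> h)"
      using rep_compose mult_BijGroup[OF moebius_Bij moebius_Bij] rep_invertible by (simp add: P.mult_eq)
  qed (auto simp: BijGroup_def intro!: moebius_Bij rep_invertible dest: subsetD[OF assms(2)])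
  then show ?thesis
    unfolding group_action_def group_hom_def group_hom_axioms_def using P.group group_BijGroup by blast
qed

lemma rep_fixed_point:
  assumes "subgroup P (BijGroup V)" "P \<subseteq> G" "card P = p"
  shows "\<exists>y\<le>p. \<forall>g\<in>P. moebius p (\<rho> g) y = y"
proof -
  have "card {0..p} mod p = 1" using prime_gt_1_nat[OF prime] by (simp add: mod_Suc)
  then have "\<not> p dvd card {0..p}" by (simp add: dvd_eq_mod_eq_0)
  then show ?thesis
    using group_action.prime_order_fixed_point[OF rep_action[OF assms(1,2)] prime] assms(3)
    by (auto simp: order_def)
qed

lemma rep_conjugate:
  assumes "mat_invertible R" "mat_invertible R'" "moebius p (mat_mult R' R) = (\<lambda>z\<in>{0..p}. z)"
  shows "moebius_rep p V G (\<lambda>g. mat_mult R (mat_mult (\<rho> g) R'))"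
proof unfold_locales
  fix g h assume gh: "g \<in> G" "h \<in> G"
  have "moebius p (mat_mult (\<rho> g) (mat_mult (mat_mult R' R) (\<rho> h))) = moebius p (mat_mult (\<rho> g) (\<rho> h))"
    using moebius_mat_mult_id_left assms rep_invertible gh moebius_mat_mult mat_invertible_mat_mult by metis
  then have "moebius p (mat_mult R (mat_mult (mat_mult (\<rho> g) (mat_mult (mat_mult R' R) (\<rho> h))) R'))
      = moebius p (mat_mult R (mat_mult (mat_mult (\<rho> g) (\<rho> h)) R'))"
    using moebius_sandwich assms rep_invertible gh mat_invertible_mat_mult by metis
  also have "\<dots> = moebius p (mat_mult R (mat_mult (\<rho> (compose V g h)) R'))"
    using moebius_sandwich assms rep_invertible gh mat_invertible_mat_mult rep_mult compose_mem by metis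
  finally show "moebius p (mat_mult R (mat_mult (\<rho> (compose V g h)) R')) =
      moebius p (mat_mult (mat_mult R (mat_mult (\<rho> g) R')) (mat_mult R (mat_mult (\<rho> h) R')))"
    by (simp add: mat_mult_assoc)
next
  fix g h assume gh: "g \<in> G" "h \<in> G"
    and e: "moebius p (mat_mult R (mat_mult (\<rho> g) R')) = moebius p (mat_mult R (mat_mult (\<rho> h) R'))"
  have undo: "moebius p (mat_mult R' (mat_mult (mat_mult R (mat_mult X R')) R)) = moebius p X"
    if "mat_invertible X" for X
  proof -
    have "mat_mult R' (mat_mult (mat_mult R (mat_mult X R')) R) = mat_mult (mat_mult R' R) (mat_mult X (mat_mult R' R))"
      by (simp add: mat_mult_assoc)
    then show ?thesis
      using moebius_mat_mult_id_left moebius_mat_mult_id_right assms that mat_invertible_mat_mult by metis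
  qed
  have "moebius p (mat_mult R' (mat_mult (mat_mult R (mat_mult (\<rho> g) R')) R))
      = moebius p (mat_mult R' (mat_mult (mat_mult R (mat_mult (\<rho> h) R')) R))"
    using moebius_sandwich e assms rep_invertible gh mat_invertible_mat_mult by metis
  then show "g = h" using undo rep_invertible gh rep_inj by simp
qed (use rep_invertible assms mat_invertible_mat_mult in simp)

lemma rep_conjugate_fixed_point_to_infinity:
  assumes "y \<le> p"
  obtains \<rho>' where "moebius_rep p V G \<rho>'"
    "\<And>g. g \<in> G \<Longrightarrow> moebius p (\<rho> g) y = y \<Longrightarrow> moebius p (\<rho>' g) p = p"
    "\<And>g. mat_det (\<rho>' g) = mat_det (\<rho> g)"
proof -
  obtain R R' where R: "mat_mult R' R = (1, 0, 0, 1)" "mat_det R = 1" "mat_det R' = 1" "moebius p R y = p"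
  proof (cases "y = p")
    case True
    then show ?thesis using that[of "(1, 0, 0, 1)" "(1, 0, 0, 1)"] moebius_fixes_infinity_iff by simp
  next
    case False
    then have "moebius p (0, - 1, 1, - int y) y = p"
      using assms by (simp add: moebius_def hcoord_def proj_point_def)
    then show ?thesis using that[of "(- int y, 1, - 1, 0)" "(0, - 1, 1, - int y)"] by simp
  qed
  have inv: "mat_invertible R" "mat_invertible R'" using R(2,3) not_dvd_one by simp_all
  have "moebius p R' p = moebius p (mat_mult R' R) y"
    using moebius_mat_mult[OF inv(2,1)] R(4) assms by (metis atLeastAtMost_iff compose_eq le0)
  then have R'p: "moebius p R' p = y" using R(1) moebius_one assms by simp
  have "moebius p (mat_mult R (mat_mult (\<rho> g) R')) p = p"
    if "g \<in> G" "moebius p (\<rho> g) y = y" for g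
  proof -
    have "moebius p (mat_mult R (mat_mult (\<rho> g) R'))
        = compose {0..p} (moebius p R) (compose {0..p} (moebius p (\<rho> g)) (moebius p R'))"
      using moebius_mat_mult inv rep_invertible[OF that(1)] mat_invertible_mat_mult by simp
    then have "moebius p (mat_mult R (mat_mult (\<rho> g) R')) p = moebius p R (moebius p (\<rho> g) (moebius p R' p))"
      using moebius_le[of p R'] by (simp add: compose_eq)
    then show ?thesis using R'p that(2) R(4) by simp
  qed
  moreover have "mat_det (mat_mult R (mat_mult (\<rho> g) R')) = mat_det (\<rho> g)" for g
    using R(2,3) by (simp add: mat_det_mat_mult)
  ultimately show ?thesis
    using that rep_conjugate[OF inv] R(1) moebius_one by simp
qed

lemma rep_order_p_fixing_infinity:
  assumes "\<tau> \<in> G" "\<tau> [^]\<^bsub>BijGroup V\<^esub> (p::nat) = (\<lambda>x\<in>V. x)" "\<tau> \<noteq> (\<lambda>x\<in>V. x)" "moebius p (\<rho> \<tau>) p = p"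
  shows "\<exists>\<beta>. \<not> int p dvd \<beta> \<and> moebius p (\<rho> \<tau>) = moebius p (1, \<beta>, 0, 1)"
proof -
  obtain a b c d where abcd: "\<rho> \<tau> = (a, b, c, d)" by (cases "\<rho> \<tau>") auto
  have c: "int p dvd c" using assms(4) abcd moebius_fixes_infinity_iff by simp
  then have ad: "\<not> int p dvd a * d" using rep_invertible[OF assms(1)] abcd by auto
  have upper: "moebius p (\<rho> \<tau>) = moebius p (a, b, 0, d)"
    unfolding abcd using rep_invertible[OF assms(1)] abcd ad c by (intro moebius_cong) simp_all
  obtain x where x: "mat_pow (a, b, 0, d) p = (a ^ p, x, 0, d ^ p)" using mat_pow_upper_triangular by blast
  have "moebius p (a ^ p, x, 0, d ^ p) = (\<lambda>z\<in>{0..p}. z)"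
    using rep_power[OF assms(1), of p] assms(2) rep_id upper x
      moebius_mat_pow_cong[OF rep_invertible[OF assms(1)], of "(a, b, 0, d)"] ad by simp
  moreover have "mat_invertible (a ^ p, x, 0, d ^ p)"
    using mat_invertible_mat_pow[of "(a, b, 0, d)" p] ad x by simp
  ultimately have "int p dvd a ^ p - d ^ p" using moebius_eq_id_imp_scalar by blast
  moreover have "a - d = (a ^ p - d ^ p) - (a ^ p - a) + (d ^ p - d)" by simp
  ultimately have ad_eq: "int p dvd d - a * 1"
    using fermat_int[of a] fermat_int[of d] by (metis dvd_add dvd_diff dvd_diff_commute mult_1_right)
  define \<beta> where "\<beta> = b * modular_inverse (int p) a"
  have "b - a * \<beta> = - (b * (a * modular_inverse (int p) a - 1))" by (simp add: \<beta>_def algebra_simps)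
  moreover have "\<not> int p dvd a" using ad by auto
  ultimately have "int p dvd b - a * \<beta>" using modular_inverse_right[of a] by simp
  then have translation: "moebius p (\<rho> \<tau>) = moebius p (1, \<beta>, 0, 1)"
    using upper ad ad_eq not_dvd_one by (simp add: moebius_scalar_cong[where l=a])
  moreover have "\<not> int p dvd \<beta>"
  proof
    assume "int p dvd \<beta>"
    then have "moebius p (\<rho> \<tau>) = moebius p (1, 0, 0, 1)"
      unfolding translation using not_dvd_one by (intro moebius_cong) simp_all
    then show False using assms(1,3) rep_eq_id_imp moebius_one by simp
  qed
  ultimately show ?thesis by blast
qed

lemma rep_power_translation:
  assumes "\<tau> \<in> G" "moebius p (\<rho> \<tau>) = moebius p (1, \<beta>, 0, 1)" "\<not> int p dvd \<beta>"
  shows "\<exists>n::nat. moebius p (\<rho> (\<tau> [^]\<^bsub>BijGroup V\<^esub> n)) = moebius p (1, e, 0, 1)"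
proof -
  define i where "i = modular_inverse (int p) \<beta>"
  define n where "n = nat ((e * i) mod int p)"
  have "int n = (e * i) mod int p" using int_p_pos by (simp add: n_def)
  then have "int p dvd int n - e * i" by (simp add: mod_eq_dvd_iff[symmetric])
  moreover have "int n * \<beta> - e = (int n - e * i) * \<beta> + e * (\<beta> * i - 1)" by (simp add: algebra_simps)
  ultimately have "int p dvd int n * \<beta> - e"
    using modular_inverse_right[OF assms(3)] unfolding i_def by simp
  then have "moebius p (1, int n * \<beta>, 0, 1) = moebius p (1, e, 0, 1)"
    using not_dvd_one by (intro moebius_cong) simp_all
  moreover have "moebius p (\<rho> (\<tau> [^]\<^bsub>BijGroup V\<^esub> n)) = moebius p (1, int n * \<beta>, 0, 1)"
    using rep_power[OF assms(1)] moebius_mat_pow_cong[OF rep_invertible[OF assms(1)] _ assms(2)]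
      not_dvd_one by (simp add: mat_pow_translation)
  ultimately have "moebius p (\<rho> (\<tau> [^]\<^bsub>BijGroup V\<^esub> n)) = moebius p (1, e, 0, 1)" by simp
  then show ?thesis by blast
qed

lemma rep_cube_eq_id_imp:
  assumes "g \<in> G" "mat_invertible N" "moebius p (\<rho> g) = moebius p N"
    and "moebius p (mat_mult (mat_mult N N) N) = (\<lambda>z\<in>{0..p}. z)"
  shows "compose V g (compose V g g) = (\<lambda>x\<in>V. x)"
proof -
  have "moebius p (\<rho> (compose V g (compose V g g))) = moebius p (mat_mult N (mat_mult N N))"
    using rep_compose assms(1-3) compose_mem moebius_mat_mult mat_invertible_mat_mult by simp
  then show ?thesis
    using assms(4) rep_eq_id_imp compose_mem assms(1) by (simp add: mat_mult_assoc)
qed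

lemma rep_involution_fixing_infinity:
  assumes "h \<in> G" "compose V h h = (\<lambda>x\<in>V. x)" "h \<noteq> (\<lambda>x\<in>V. x)" "moebius p (\<rho> h) p = p"
  shows "\<exists>a b d. moebius p (\<rho> h) = moebius p (a, b, 0, d) \<and> \<not> int p dvd a * d \<and> int p dvd a + d"
proof -
  obtain a b c d where abcd: "\<rho> h = (a, b, c, d)" by (cases "\<rho> h") auto
  have c: "int p dvd c" using assms(4) abcd moebius_fixes_infinity_iff by simp
  then have ad: "\<not> int p dvd a * d" using rep_invertible[OF assms(1)] abcd by auto
  have upper: "moebius p (\<rho> h) = moebius p (a, b, 0, d)"
    unfolding abcd using rep_invertible[OF assms(1)] abcd ad c by (intro moebius_cong) simp_all
  have inv: "mat_invertible (a, b, 0, d)" using ad by simp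
  have "compose {0..p} (moebius p (\<rho> h)) (moebius p (\<rho> h)) = (\<lambda>z\<in>{0..p}. z)"
    using rep_compose[OF assms(1,1)] unfolding assms(2) rep_id by (rule sym)
  then have "moebius p (mat_mult (a, b, 0, d) (a, b, 0, d)) = (\<lambda>z\<in>{0..p}. z)"
    unfolding upper moebius_mat_mult[OF inv inv] .
  moreover have "mat_mult (a, b, 0, d) (a, b, 0, d) = (a * a, b * (a + d), 0, d * d)"
    by (simp add: algebra_simps)
  ultimately have "moebius p (a * a, b * (a + d), 0, d * d) = (\<lambda>z\<in>{0..p}. z)" by (simp only:)
  moreover have "mat_invertible (a * a, b * (a + d), 0, d * d)" using ad by (simp add: dvd_mult_iff)
  ultimately have "int p dvd b * (a + d) \<and> int p dvd 0 \<and> int p dvd a * a - d * d"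
    using moebius_eq_id_imp_scalar by blast
  moreover have "a * a - d * d = (a - d) * (a + d)" by (simp add: algebra_simps)
  ultimately have sq: "int p dvd b * (a + d)" "int p dvd (a - d) * (a + d)" by simp_all
  show ?thesis
  proof (cases "int p dvd a + d")
    case False
    then have "int p dvd b" "int p dvd a - d" using sq by (simp_all add: dvd_mult_iff)
    then have "moebius p (a, b, 0, d) = moebius p (1, 0, 0, 1)"
      using inv ad not_dvd_one
      by (intro moebius_scalar_cong[where l=a]) (simp_all add: dvd_diff_commute[of _ d])
    then show ?thesis using upper moebius_one rep_eq_id_imp assms(1,3) by simp
  qed (use upper ad in blast)
qed

end

lemma (in prime_modulus) moebius_rep_of_iso:
  assumes "subgroup G (BijGroup V)" "\<phi> \<in> iso (perm_group V G) (perm_group {0..p} K)"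
    and "\<And>\<sigma>. \<sigma> \<in> K \<Longrightarrow> \<exists>M. mat_invertible M \<and> Q M \<and> \<sigma> = moebius p M"
  shows "\<exists>\<rho>. moebius_rep p V G \<rho> \<and> (\<forall>g\<in>G. Q (\<rho> g))"
proof -
  interpret perm_subgroup V G by (rule perm_subgroup.intro[OF assms(1)])
  have bij: "bij_betw \<phi> G K" and hom: "\<phi> \<in> hom (perm_group V G) (perm_group {0..p} K)"
    using assms(2) by (auto simp: iso_def)
  have "\<forall>g\<in>G. \<exists>M. mat_invertible M \<and> Q M \<and> \<phi> g = moebius p M"
    using assms(3) bij_betw_apply[OF bij] by blast
  then obtain \<rho> where \<rho>: "\<forall>g\<in>G. mat_invertible (\<rho> g) \<and> Q (\<rho> g) \<and> \<phi> g = moebius p (\<rho> g)"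
    by (rule bchoice[THEN exE])
  have \<phi>_compose: "\<phi> (compose V g h) = compose {0..p} (\<phi> g) (\<phi> h)" if "g \<in> G" "h \<in> G" for g h
  proof -
    have "\<phi> (g \<otimes>\<^bsub>perm_group V G\<^esub> h) = \<phi> g \<otimes>\<^bsub>perm_group {0..p} K\<^esub> \<phi> h"
      using hom that by (simp add: hom_mult)
    moreover have "\<phi> g \<in> Bij {0..p}" "\<phi> h \<in> Bij {0..p}" using \<rho> that moebius_Bij by simp_all
    then have "\<phi> g \<otimes>\<^bsub>perm_group {0..p} K\<^esub> \<phi> h = compose {0..p} (\<phi> g) (\<phi> h)"
      by (simp add: perm_group_def mult_BijGroup)
    ultimately show ?thesis using mult_eq[OF that] by simp
  qed
  have "moebius_rep_axioms p V G \<rho>"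
  proof
    fix g h assume gh: "g \<in> G" "h \<in> G"
    show "moebius p (\<rho> (compose V g h)) = moebius p (mat_mult (\<rho> g) (\<rho> h))"
      using \<phi>_compose[OF gh] \<rho> gh compose_mem moebius_mat_mult by simp
    show "moebius p (\<rho> g) = moebius p (\<rho> h) \<Longrightarrow> g = h"
      using \<rho> gh bij_betw_imp_inj_on[OF bij] by (simp add: inj_on_def)
  qed (use \<rho> in simp)
  then have "moebius_rep p V G \<rho>"
    by (intro moebius_rep.intro prime_modulus_axioms perm_subgroup_axioms)
  then show ?thesis using \<rho> by blast
qed

section \<open>Arc-transitive graphs with a Moebius representation\<close>

locale moebius_graph = moebius_rep p V G \<rho> for p V G \<rho> +
  fixes E :: "'v \<Rightarrow> 'v \<Rightarrow> bool" and v0 :: 'v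
  assumes graph: "simple_graph V E" and connected: "graph_connected V E"
    and valency: "valency V E p" and aut: "G \<subseteq> graph_aut V E"
    and arc_transitive: "arc_transitive V E G" and v0: "v0 \<in> V"
begin

lemma vertex_transitive: "u \<in> V \<Longrightarrow> \<exists>g\<in>G. g v0 = u"
  using arc_transitive_vertex_transitive[OF graph valency _ arc_transitive v0]
    prime_gt_0_nat[OF prime] by blast

lemma aut_adj: "g \<in> G \<Longrightarrow> x \<in> V \<Longrightarrow> y \<in> V \<Longrightarrow> E x y \<longleftrightarrow> E (g x) (g y)"
  using aut by (auto simp: graph_aut_def)

end

locale translation_graph = moebius_graph p V G \<rho> E v0 for p V G \<rho> E v0 +
  fixes \<tau> :: "'v \<Rightarrow> 'v"
  assumes tau: "\<tau> \<in> G" "\<tau> v0 = v0"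
    and rep_tau: "moebius p (\<rho> \<tau>) = moebius p (1, 1, 0, 1)"
begin

abbreviation tau_power :: "nat \<Rightarrow> 'v \<Rightarrow> 'v" where
  "tau_power n \<equiv> \<tau> [^]\<^bsub>BijGroup V\<^esub> n"

lemma tau_power_stabilizes: "tau_power n \<in> G \<and> tau_power n v0 = v0"
proof (induction n)
  case 0
  show ?case unfolding power_0 by (rule conjI[OF id_mem restrict_apply'[OF v0]])
next
  case (Suc n)
  then show ?case using power_Suc[OF tau(1)] power_mem[OF tau(1)] tau v0 compose_mem by (simp add: compose_eq)
qed

lemma rep_tau_power: "moebius p (\<rho> (tau_power n)) = moebius p (1, int n, 0, 1)"
  using rep_power[OF tau(1)] moebius_mat_pow_cong[OF rep_invertible[OF tau(1)] _ rep_tau]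
    not_dvd_one by (simp add: mat_pow_translation)

lemma rep_tau_power_apply: "z < p \<Longrightarrow> moebius p (\<rho> (tau_power n)) z = nat ((int z + int n) mod int p)"
  using rep_tau_power moebius_translation by simp

lemma rep_tau_power_infinity: "moebius p (\<rho> (tau_power n)) p = p"
  using rep_tau_power moebius_fixes_infinity_iff by simp

lemma translation_tau_power: "\<exists>n. moebius p (\<rho> (tau_power n)) = moebius p (1, e, 0, 1)"
  using rep_power_translation[OF tau(1) rep_tau] not_dvd_one by simp

text \<open>Elements fixing \<open>\<infinity>\<close> are upper triangular, hence normalise the translations.\<close>
lemma tau_compose_infinity_stabilizer:
  assumes "g \<in> G" "moebius p (\<rho> g) p = p"
  shows "\<exists>n. compose V \<tau> g = compose V g (tau_power n)"
proof -
  obtain a b c d where abcd: "\<rho> g = (a, b, c, d)" by (cases "\<rho> g") auto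
  have c: "int p dvd c" using assms(2) abcd moebius_fixes_infinity_iff by simp
  have inv: "mat_invertible (a, b, c, d)" using rep_invertible[OF assms(1)] abcd by simp
  then have a: "\<not> int p dvd a" using c by auto
  define n where "n = nat ((d * modular_inverse (int p) a) mod int p)"
  have "int n = (d * modular_inverse (int p) a) mod int p" using int_p_pos by (simp add: n_def)
  then have "int p dvd int n - d * modular_inverse (int p) a" by (simp add: mod_eq_dvd_iff[symmetric])
  moreover have "a * int n - d = a * (int n - d * modular_inverse (int p) a)
      + d * (a * modular_inverse (int p) a - 1)" by (simp add: algebra_simps)
  ultimately have an: "int p dvd a * int n - d" using modular_inverse_right[OF a] by simp
  have inv1: "mat_invertible (1, 1, 0, 1)" "mat_invertible (1, int n, 0, 1)" using not_dvd_one by simp_all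
  have "moebius p (\<rho> (compose V \<tau> g)) = moebius p (a + c, b + d, c, d)"
    using rep_compose[OF tau(1) assms(1)] rep_tau moebius_mat_mult[OF inv1(1) inv] abcd by simp
  also have "\<dots> = moebius p (a, a * int n + b, c, c * int n + d)"
  proof (rule moebius_cong)
    show "mat_invertible (a + c, b + d, c, d)" "mat_invertible (a, a * int n + b, c, c * int n + d)"
      using inv by (simp_all add: algebra_simps)
    have "int p dvd d - a * int n" by (subst dvd_diff_commute) (rule an)
    then show "int p dvd b + d - (a * int n + b)" by simp
    show "int p dvd d - (c * int n + d)" using c by simp
  qed (use c in simp_all)
  also have "\<dots> = moebius p (\<rho> (compose V g (tau_power n)))"
    using rep_compose[OF assms(1)] tau_power_stabilizes rep_tau_power moebius_mat_mult[OF inv inv1(2)] abcd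
    by (simp add: algebra_simps)
  finally show ?thesis
    using rep_inj compose_mem tau(1) assms(1) tau_power_stabilizes by blast
qed

lemma neighbour_moving_infinity: "\<exists>x\<in>G. E v0 (x v0) \<and> moebius p (\<rho> x) p \<noteq> p"
proof (rule ccontr)
  assume "\<not> ?thesis"
  then have movers: "\<And>x. x \<in> G \<Longrightarrow> E v0 (x v0) \<Longrightarrow> x \<in> {g \<in> G. moebius p (\<rho> g) p = p}" by blast
  have "\<tau> u = u" if u: "u \<in> V" for u
  proof -
    obtain h where h: "h \<in> G" "moebius p (\<rho> h) p = p" "h v0 = u"
      using transitive_if_contains_neighbour_movers[OF connected aut v0 vertex_transitive _ _ _ movers u]
        rep_id id_mem compose_mem rep_compose_apply by fastforce
    obtain n where "compose V \<tau> h = compose V h (tau_power n)"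
      using tau_compose_infinity_stabilizer[OF h(1,2)] by blast
    then have "\<tau> (h v0) = h (tau_power n v0)" using v0 by (metis compose_eq)
    then show ?thesis using h(3) tau_power_stabilizes by simp
  qed
  then have "\<tau> = (\<lambda>x\<in>V. x)" using eqI[OF tau(1) id_mem] by simp
  then have "moebius p (1, 1, 0, 1) = (\<lambda>z\<in>{0..p}. z)" using rep_tau rep_id by simp
  then have "moebius p (1, 1, 0, 1) 0 = 0" by simp
  moreover have "moebius p (1, 1, 0, 1) 0 = 1"
    using prime_gt_1_nat[OF prime] moebius_translation[of 0 1] by simp
  ultimately show False by simp
qed

lemma has_triangle_if_square:
  assumes x: "x \<in> G" "E v0 (x v0)" "moebius p (\<rho> x) p \<noteq> p"
    and A: "A \<in> G" "A v0 = v0" "moebius p (\<rho> A) = moebius p (\<alpha>, \<beta>, 0, \<delta>)" "\<not> int p dvd \<alpha> * \<delta>"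
    and w: "int p dvd w\<^sup>2 - \<alpha> * \<delta> * mat_det (\<rho> x)"
  shows "has_triangle V E"
proof -
  obtain a b c d where abcd: "\<rho> x = (a, b, c, d)" by (cases "\<rho> x") auto
  have c: "\<not> int p dvd c" using x(3) abcd moebius_fixes_infinity_iff by simp
  have \<alpha>c: "\<not> int p dvd \<alpha> * c" using A(4) c by (simp add: dvd_mult_iff)
  txt \<open>Choose the translation \<open>e\<close> so that the trace of \<open>A \<tau>\<^sup>n x\<close> becomes \<open>w\<close>.\<close>
  define e where "e = (w - \<alpha> * a - \<beta> * c - \<delta> * d) * modular_inverse (int p) (\<alpha> * c)"
  obtain n where n: "moebius p (\<rho> (tau_power n)) = moebius p (1, e, 0, 1)"
    using translation_tau_power by blast
  define g where "g = compose V A (compose V (tau_power n) x)"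
  define N where "N = mat_mult (\<alpha>, \<beta>, 0, \<delta>) (mat_mult (1, e, 0, 1) (a, b, c, d))"
  have N: "N = (\<alpha> * (a + e * c) + \<beta> * c, \<alpha> * (b + e * d) + \<beta> * d, \<delta> * c, \<delta> * d)"
    by (simp add: N_def algebra_simps)
  have inv: "mat_invertible (\<alpha>, \<beta>, 0, \<delta>)" "mat_invertible (1, e, 0, 1)" "mat_invertible (a, b, c, d)"
    using A(4) not_dvd_one rep_invertible[OF x(1)] abcd by simp_all
  then have invN: "mat_invertible N" unfolding N_def using mat_invertible_mat_mult by blast
  have gG: "g \<in> G" using A(1) tau_power_stabilizes x(1) compose_mem by (simp add: g_def)
  have "moebius p (\<rho> g) = compose {0..p} (moebius p (\<alpha>, \<beta>, 0, \<delta>))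
      (compose {0..p} (moebius p (1, e, 0, 1)) (moebius p (a, b, c, d)))"
    using rep_compose A(1,3) tau_power_stabilizes x(1) compose_mem n abcd by (simp only: g_def)
  also have "\<dots> = moebius p N"
    unfolding N_def moebius_mat_mult[OF inv(2,3)]
    by (rule moebius_mat_mult[OF inv(1) mat_invertible_mat_mult[OF inv(2,3)]])
  finally have rep_g: "moebius p (\<rho> g) = moebius p N" .
  have "\<alpha> * (a + e * c) + \<beta> * c + \<delta> * d - w
      = (w - \<alpha> * a - \<beta> * c - \<delta> * d) * (\<alpha> * c * modular_inverse (int p) (\<alpha> * c) - 1)"
    by (simp add: e_def algebra_simps)
  then have trace: "int p dvd (\<alpha> * (a + e * c) + \<beta> * c + \<delta> * d) - w"
    using modular_inverse_right[OF \<alpha>c] by simp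
  have "mat_det N = \<alpha> * \<delta> * mat_det (\<rho> x)"
    unfolding N_def mat_det_mat_mult using abcd by simp
  then have w': "int p dvd w\<^sup>2 - mat_det N" using w by simp
  let ?t = "\<alpha> * (a + e * c) + \<beta> * c + \<delta> * d"
  have "?t\<^sup>2 - mat_det N = (?t - w) * (?t + w) + (w\<^sup>2 - mat_det N)"
    by (simp add: algebra_simps power2_eq_square)
  moreover have "int p dvd (?t - w) * (?t + w) + (w\<^sup>2 - mat_det N)"
    by (rule dvd_add[OF dvd_mult2[OF trace] w'])
  ultimately have "int p dvd ?t\<^sup>2 - mat_det N" by (simp only:)
  moreover have "mat_trace N = ?t" by (simp add: N)
  ultimately have "int p dvd (mat_trace N)\<^sup>2 - mat_det N" by (simp only:)
  then have "moebius p (mat_mult (mat_mult N N) N) = (\<lambda>z\<in>{0..p}. z)"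
    by (rule moebius_cube_eq_id[OF invN])
  then have g3: "compose V g (compose V g g) = (\<lambda>x\<in>V. x)"
    using rep_cube_eq_id_imp[OF gG invN rep_g] by blast
  have xv: "x v0 \<in> V" using apply_mem x(1) v0 by blast
  have tG: "tau_power n \<in> G" "tau_power n v0 = v0" using tau_power_stabilizes by blast+
  have "E (tau_power n v0) (tau_power n (x v0))" using aut_adj[OF tG(1) v0 xv] x(2) by blast
  then have "E v0 (tau_power n (x v0))" by (simp only: tG(2))
  moreover have "tau_power n (x v0) \<in> V" using apply_mem tG(1) xv by blast
  ultimately have "E (A v0) (A (tau_power n (x v0)))" using aut_adj[OF A(1) v0] by blast
  then have gv0: "E v0 (g v0)" using A(2) v0 by (simp add: g_def compose_eq)
  have "g (g (g v0)) = v0"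
    using fun_cong[OF g3, of v0] v0 by (simp add: compose_eq)
  then show ?thesis
    using has_triangle_order_three_aut[OF graph subsetD[OF aut gG] v0 gv0] by blast
qed

lemma rep_tau_power_zero: "i < p \<Longrightarrow> moebius p (\<rho> (tau_power i)) 0 = i"
  using rep_tau_power_apply[of 0 i] prime_gt_0_nat[OF prime] by (simp flip: of_nat_mod)

lemma tau_power_inj: "i < p \<Longrightarrow> i' < p \<Longrightarrow> tau_power i = tau_power i' \<Longrightarrow> i = i'"
  using rep_tau_power_zero by metis

text \<open>The elements \<open>\<tau>\<^sup>i h \<tau>\<^sup>j h\<close> (\<open>i, j < p\<close>) are distinct: \<open>\<tau>\<^sup>i h \<tau>\<^sup>j h\<close> sends \<open>h u\<close>
  to \<open>\<infinity>\<close> exactly when \<open>\<tau>\<^sup>j u = h \<infinity>\<close>, which determines \<open>j\<close>.\<close>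
lemma card_stabilizer_if_involution_moves_infinity:
  assumes h: "h \<in> G" "h v0 = v0" "compose V h h = (\<lambda>x\<in>V. x)" "moebius p (\<rho> h) p \<noteq> p"
  shows "p\<^sup>2 \<le> card {g \<in> G. g v0 = v0}"
proof -
  let ?\<sigma> = "moebius p (\<rho> h)" and ?T = "\<lambda>n. moebius p (\<rho> (tau_power n))"
  have \<sigma>\<sigma>: "?\<sigma> (?\<sigma> z) = z" if "z \<le> p" for z
  proof -
    have "?\<sigma> (?\<sigma> z) = moebius p (\<rho> (compose V h h)) z" using rep_compose_apply[OF h(1,1) that] by simp
    then show ?thesis using h(3) rep_id that by simp
  qed
  define y where "y = ?\<sigma> p"
  have y: "y < p" "?\<sigma> y = p" using h(4) rep_le[of p h] \<sigma>\<sigma>[of p] by (simp_all add: y_def)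
  have \<sigma>_infinity: "?\<sigma> w = p \<longleftrightarrow> w = y" if "w \<le> p" for w
  proof
    assume "?\<sigma> w = p"
    then have "?\<sigma> (?\<sigma> w) = ?\<sigma> p" by simp
    then show "w = y" unfolding \<sigma>\<sigma>[OF that] y_def .
  qed (use y(2) in simp)
  have T_infinity: "?T n w = p \<longleftrightarrow> w = p" if "w \<le> p" for n w
  proof (cases "w = p")
    case False
    then have "w < p" using that by simp
    moreover have "(int w + int n) mod int p \<noteq> int p" using pos_mod_bound[OF int_p_pos] by (metis less_irrefl)
    ultimately show ?thesis using rep_tau_power_apply False by (simp add: nat_eq_iff)
  qed (simp add: rep_tau_power_infinity)
  define F where "F ij = compose V (tau_power (fst ij)) (compose V h (compose V (tau_power (snd ij)) h))" for ij
  have FG: "F ij \<in> G" "F ij v0 = v0" for ij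
  proof -
    have "tau_power (fst ij) \<in> G" "tau_power (snd ij) \<in> G" "tau_power (fst ij) v0 = v0"
      "tau_power (snd ij) v0 = v0" using tau_power_stabilizes by blast+
    then show "F ij \<in> G" "F ij v0 = v0" using h(1,2) compose_mem v0 by (simp_all add: F_def compose_eq)
  qed
  have F_infinity: "moebius p (\<rho> (F (i, j))) (?\<sigma> u) = p \<longleftrightarrow> ?T j u = y" if "u < p" for i j u
  proof -
    have G: "tau_power i \<in> G" "tau_power j \<in> G" "compose V (tau_power j) h \<in> G"
      "compose V h (compose V (tau_power j) h) \<in> G"
      using tau_power_stabilizes h(1) compose_mem by blast+
    have "moebius p (\<rho> (F (i, j))) (?\<sigma> u) = ?T i (?\<sigma> (?T j (?\<sigma> (?\<sigma> u))))"
      unfolding F_def fst_conv snd_conv using G h(1) rep_compose_apply rep_le that by simp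
    then have "moebius p (\<rho> (F (i, j))) (?\<sigma> u) = ?T i (?\<sigma> (?T j u))" using \<sigma>\<sigma> that by simp
    moreover have "?T j u \<le> p" using rep_le that by simp
    ultimately show ?thesis using T_infinity[OF rep_le] \<sigma>_infinity by simp
  qed
  have inj: "inj_on F ({..<p} \<times> {..<p})"
  proof (rule inj_onI)
    fix ij ij' assume ij: "ij \<in> {..<p} \<times> {..<p}" "ij' \<in> {..<p} \<times> {..<p}" and eq: "F ij = F ij'"
    obtain i j i' j' where ij_def: "ij = (i, j)" "ij' = (i', j')" by fastforce
    have r: "i < p" "j < p" "i' < p" "j' < p" using ij ij_def by auto
    define u where "u = nat ((int y - int j) mod int p)"
    have u: "u < p" "int u = (int y - int j) mod int p" using int_p_pos by (simp_all add: u_def nat_less_iff)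
    have Tu: "int (?T n u) = (int u + int n) mod int p" for n
      using rep_tau_power_apply[OF u(1)] int_p_pos by simp
    have "int (?T j u) = int y" unfolding Tu u(2) using y(1) by (simp add: mod_add_left_eq)
    then have "?T j' u = y"
      using F_infinity[OF u(1), of i j] F_infinity[OF u(1), of i' j'] eq ij_def by simp
    then have "(int u + int j') mod int p = (int u + int j) mod int p"
      using \<open>int (?T j u) = int y\<close> Tu[of j'] Tu[of j] by simp
    then have "int p dvd (int j' - int j) * 1" by (simp add: mod_eq_dvd_iff)
    then have j: "j' = j" using mod_residue_eq[OF r(4,2)] not_dvd_one by blast
    have "compose V (tau_power i) (compose V h (compose V (tau_power j) h))
        = compose V (tau_power i') (compose V h (compose V (tau_power j) h))"
      using eq ij_def j by (simp add: F_def)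
    moreover have "compose V h (compose V (tau_power j) h) \<in> G"
      using tau_power_stabilizes h(1) compose_mem by blast
    ultimately have "tau_power i = tau_power i'"
      by (rule compose_cancel_right[OF conjunct1[OF tau_power_stabilizes] conjunct1[OF tau_power_stabilizes], rotated])
    then have "i = i'" by (rule tau_power_inj[OF r(1,3)])
    then show "ij = ij'" using ij_def j by simp
  qed
  have card: "card (F ` ({..<p} \<times> {..<p})) = p * p" using card_image[OF inj] by simp
  have sub: "F ` ({..<p} \<times> {..<p}) \<subseteq> {g \<in> G. g v0 = v0}"
    by (rule image_subsetI) (simp add: FG)
  have "finite V" using graph by (simp add: simple_graph_def)
  then have "finite G" by (rule finite_group)
  then have "finite {g \<in> G. g v0 = v0}" by simp
  then have "p * p \<le> card {g \<in> G. g v0 = v0}" using card_mono[OF _ sub] card by simp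
  then show ?thesis by (simp add: power2_eq_square)
qed

lemma identity_square_stabilizer_element:
  assumes "int p dvd w\<^sup>2 - \<Delta>"
  shows "\<exists>A\<in>G. A v0 = v0 \<and> (\<exists>\<alpha> \<beta> \<delta> w. moebius p (\<rho> A) = moebius p (\<alpha>, \<beta>, 0, \<delta>)
    \<and> \<not> int p dvd \<alpha> * \<delta> \<and> int p dvd w\<^sup>2 - \<alpha> * \<delta> * \<Delta>)"
proof -
  have "(\<lambda>x\<in>V. x) v0 = v0 \<and> moebius p (\<rho> (\<lambda>x\<in>V. x)) = moebius p (1, 0, 0, 1)
      \<and> \<not> int p dvd 1 * 1 \<and> int p dvd w\<^sup>2 - 1 * 1 * \<Delta>"
    using rep_id moebius_one v0 not_dvd_one assms by simp
  then show ?thesis using id_mem by blast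
qed

lemma exists_square_stabilizer_element:
  assumes "p mod 4 = 3" "even (card {g \<in> G. g v0 = v0})" "card {g \<in> G. g v0 = v0} < p\<^sup>2"
    and "\<not> int p dvd \<Delta>"
  shows "\<exists>A\<in>G. A v0 = v0 \<and> (\<exists>\<alpha> \<beta> \<delta> w. moebius p (\<rho> A) = moebius p (\<alpha>, \<beta>, 0, \<delta>)
    \<and> \<not> int p dvd \<alpha> * \<delta> \<and> int p dvd w\<^sup>2 - \<alpha> * \<delta> * \<Delta>)"
proof -
  from square_or_neg_square[OF assms(1,4)] show ?thesis
  proof
    assume "\<exists>w. int p dvd w\<^sup>2 - \<Delta>"
    then show ?thesis using identity_square_stabilizer_element by blast
  next
    assume "\<exists>w. int p dvd w\<^sup>2 + \<Delta>"
    then obtain w where w: "int p dvd w\<^sup>2 + \<Delta>" by blast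
    interpret stab: perm_subgroup V "{g \<in> G. g v0 = v0}"
      by (rule perm_subgroup.intro[OF stabilizer_subgroup[OF v0]])
    have "finite V" using graph by (simp add: simple_graph_def)
    then obtain Q where Q: "subgroup Q (BijGroup V)" "Q \<subseteq> {g \<in> G. g v0 = v0}" "card Q = 2"
      using stab.prime_order_subgroup[OF _ two_is_prime_nat assms(2)] by blast
    then obtain h where h: "h \<in> Q" "h \<noteq> (\<lambda>x\<in>V. x)" "h [^]\<^bsub>BijGroup V\<^esub> (2::nat) = (\<lambda>x\<in>V. x)"
      using stab.prime_order_element[OF Q(1,3) two_is_prime_nat] by blast
    have hG: "h \<in> G" "h v0 = v0" using h(1) Q(2) by blast+
    have hh: "compose V h h = (\<lambda>x\<in>V. x)" using h(3) power_two[OF hG(1)] by simp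
    show ?thesis
    proof (cases "moebius p (\<rho> h) p = p")
      case True
      then obtain a b d where abd: "moebius p (\<rho> h) = moebius p (a, b, 0, d)" "\<not> int p dvd a * d"
        "int p dvd a + d"
        using rep_involution_fixing_infinity[OF hG(1) hh h(2)] by blast
      have "(a * w)\<^sup>2 - a * d * \<Delta> = a\<^sup>2 * (w\<^sup>2 + \<Delta>) - a * \<Delta> * (a + d)"
        by (simp add: algebra_simps power2_eq_square)
      moreover have "int p dvd a\<^sup>2 * (w\<^sup>2 + \<Delta>) - a * \<Delta> * (a + d)"
        using w abd(3) by (intro dvd_diff dvd_mult)
      ultimately have "int p dvd (a * w)\<^sup>2 - a * d * \<Delta>" by (simp only:)
      then show ?thesis using hG abd(1,2) by blast
    next
      case False
      then show ?thesis
        using card_stabilizer_if_involution_moves_infinity[OF hG hh] assms(3) by simp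
    qed
  qed
qed

theorem has_triangle:
  assumes "(\<forall>g\<in>G. int p dvd mat_det (\<rho> g) - 1)
    \<or> (p mod 4 = 3 \<and> even (card {g \<in> G. g v0 = v0}) \<and> card {g \<in> G. g v0 = v0} < p\<^sup>2)"
  shows "has_triangle V E"
proof -
  obtain x where x: "x \<in> G" "E v0 (x v0)" "moebius p (\<rho> x) p \<noteq> p"
    using neighbour_moving_infinity by blast
  have "\<exists>A\<in>G. A v0 = v0 \<and> (\<exists>\<alpha> \<beta> \<delta> w. moebius p (\<rho> A) = moebius p (\<alpha>, \<beta>, 0, \<delta>)
    \<and> \<not> int p dvd \<alpha> * \<delta> \<and> int p dvd w\<^sup>2 - \<alpha> * \<delta> * mat_det (\<rho> x))"
    using assms
  proof
    assume "\<forall>g\<in>G. int p dvd mat_det (\<rho> g) - 1"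
    then have "int p dvd mat_det (\<rho> x) - 1" using x(1) by blast
    then have "int p dvd 1\<^sup>2 - mat_det (\<rho> x)" by (subst dvd_diff_commute) simp
    then show ?thesis by (rule identity_square_stabilizer_element)
  next
    assume "p mod 4 = 3 \<and> even (card {g \<in> G. g v0 = v0}) \<and> card {g \<in> G. g v0 = v0} < p\<^sup>2"
    then show ?thesis using exists_square_stabilizer_element[OF _ _ _ rep_invertible[OF x(1)]] by blast
  qed
  then show ?thesis using has_triangle_if_square[OF x] by blast
qed

end

theorem (in moebius_graph) has_triangle:
  assumes "(\<forall>g\<in>G. int p dvd mat_det (\<rho> g) - 1)
    \<or> (p mod 4 = 3 \<and> even (card {g \<in> G. g v0 = v0}) \<and> card {g \<in> G. g v0 = v0} < p\<^sup>2)"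
  shows "has_triangle V E"
proof -
  interpret stab: perm_subgroup V "{g \<in> G. g v0 = v0}"
    by (rule perm_subgroup.intro[OF stabilizer_subgroup[OF v0]])
  have "finite V" using graph by (simp add: simple_graph_def)
  obtain w where "E v0 w" using valency_has_neighbour[OF valency _ v0] prime_gt_0_nat[OF prime] by blast
  then have "p dvd card {g \<in> G. g v0 = v0}"
    using stabilizer_order_dvd_valency[OF graph valency aut arc_transitive v0] by simp
  then obtain P where P: "subgroup P (BijGroup V)" "P \<subseteq> {g \<in> G. g v0 = v0}" "card P = p"
    using stab.prime_order_subgroup[OF \<open>finite V\<close> prime] by blast
  then obtain y where y: "y \<le> p" "\<forall>g\<in>P. moebius p (\<rho> g) y = y"
    using rep_fixed_point[OF P(1) _ P(3)] by blast
  obtain \<rho>' where \<rho>': "moebius_rep p V G \<rho>'" "\<And>g. g \<in> G \<Longrightarrow> moebius p (\<rho> g) y = y \<Longrightarrow> moebius p (\<rho>' g) p = p"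
    "\<And>g. mat_det (\<rho>' g) = mat_det (\<rho> g)"
    using rep_conjugate_fixed_point_to_infinity[OF y(1)] by blast
  interpret \<rho>': moebius_graph p V G \<rho>' E v0
    by (rule moebius_graph.intro[OF \<rho>'(1) moebius_graph_axioms.intro[OF graph connected valency aut arc_transitive v0]])
  obtain \<tau> where \<tau>: "\<tau> \<in> P" "\<tau> \<noteq> (\<lambda>x\<in>V. x)" "\<tau> [^]\<^bsub>BijGroup V\<^esub> p = (\<lambda>x\<in>V. x)"
    using prime_order_element[OF P(1,3) prime] by blast
  have \<tau>G: "\<tau> \<in> G" "\<tau> v0 = v0" using \<tau>(1) P(2) by blast+
  then have "moebius p (\<rho>' \<tau>) p = p" using \<rho>'(2) y(2) \<tau>(1) by blast
  then obtain \<beta> where "\<not> int p dvd \<beta>" "moebius p (\<rho>' \<tau>) = moebius p (1, \<beta>, 0, 1)"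
    using \<rho>'.rep_order_p_fixing_infinity[OF \<tau>G(1) \<tau>(3) \<tau>(2)] by blast
  then obtain n :: nat where n: "moebius p (\<rho>' (\<tau> [^]\<^bsub>BijGroup V\<^esub> n)) = moebius p (1, 1, 0, 1)"
    using \<rho>'.rep_power_translation[OF \<tau>G(1)] by blast
  have "\<tau> [^]\<^bsub>BijGroup V\<^esub> n \<in> {g \<in> G. g v0 = v0}" using stab.power_mem \<tau>G by blast
  then have "translation_graph_axioms p G \<rho>' v0 (\<tau> [^]\<^bsub>BijGroup V\<^esub> n)"
    using n by (intro translation_graph_axioms.intro) simp_all
  then interpret T: translation_graph p V G \<rho>' E v0 "\<tau> [^]\<^bsub>BijGroup V\<^esub> n"
    by (rule translation_graph.intro[OF \<rho>'.moebius_graph_axioms])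
  have "(\<forall>g\<in>G. int p dvd mat_det (\<rho>' g) - 1)
    \<or> (p mod 4 = 3 \<and> even (card {g \<in> G. g v0 = v0}) \<and> card {g \<in> G. g v0 = v0} < p\<^sup>2)"
    using assms \<rho>'(3) by simp
  then show ?thesis by (rule T.has_triangle)
qed

lemma mersenne_prime_mod_4: "mersenne_prime p \<Longrightarrow> p mod 4 = 3"
proof -
  assume "mersenne_prime p"
  then obtain k where k: "prime p" "p = 2 ^ k - 1" by (auto simp: mersenne_prime_def)
  then have "(2::nat) ^ 1 < 2 ^ k" using prime_gt_1_nat[OF k(1)] by simp
  then have "1 < k" using power_strict_increasing_iff[of "2::nat" 1 k] by simp
  then obtain j where "k = j + 2" by (intro that[of "k - 2"]) simp
  then have "p = 4 * (2 ^ j - 1) + 3" using k(2) by (simp add: power_add algebra_simps)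
  then show ?thesis by simp
qed

lemma has_triangle_PSL2_PGL2:
  assumes "prime p" "simple_graph V E" "graph_connected V E" "valency V E p"
    and "subgroup G (BijGroup V)" "G \<subseteq> graph_aut V E" "arc_transitive V E G"
    and "p mod 4 = 3" "card V = (p\<^sup>2 - 1) div (2 * s)" "s dvd (p - 1) div 2"
    and "perm_group V G \<cong> PSL2 p \<or> perm_group V G \<cong> PGL2 p"
  shows "has_triangle V E"
proof -
  interpret prime_modulus p by (rule prime_modulus.intro[OF assms(1)])
  interpret perm_subgroup V G by (rule perm_subgroup.intro[OF assms(5)])
  have p1: "1 < p" using prime_gt_1_nat[OF assms(1)] .
  have "p - 1 = 2 * ((p - 1) div 2)" using assms(8) by presburger
  then have s: "2 * s dvd p - 1" using mult_dvd_mono[OF dvd_refl assms(10), of 2] by simp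
  moreover have "p\<^sup>2 - 1 = (p - 1) * (p + 1)" by (simp add: power2_eq_square algebra_simps)
  ultimately have "2 * s dvd p\<^sup>2 - 1" by simp
  then have card_V: "card V * (2 * s) = p\<^sup>2 - 1" unfolding assms(9) by (rule dvd_div_mult_self)
  have "2 * s \<le> p - 1" using dvd_imp_le[OF s] p1 by simp
  then have sp: "2 * s < p" using p1 by simp
  have "0 < p\<^sup>2 - 1" using p1 by (simp add: power2_eq_square one_less_mult)
  then have "card V \<noteq> 0" using card_V by (metis mult_0 less_irrefl)
  then obtain v0 where v0: "v0 \<in> V" by (metis card.empty ex_in_conv)
  have graph: "moebius_graph_axioms p V G E v0"
    using assms(2-4,6,7) v0 by (rule moebius_graph_axioms.intro)
  from assms(11) show ?thesis
  proof
    assume "perm_group V G \<cong> PSL2 p"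
    then obtain \<phi> where "\<phi> \<in> iso (perm_group V G) (perm_group {0..p} (carrier (PSL2 p)))"
      unfolding is_iso_def by (auto simp: PSL2_def perm_group_def)
    then obtain \<rho> where \<rho>: "moebius_rep p V G \<rho>" "\<forall>g\<in>G. int p dvd mat_det (\<rho> g) - 1"
      using moebius_rep_of_iso[OF assms(5) _ carrier_PSL2] by blast
    show ?thesis by (rule moebius_graph.has_triangle[OF moebius_graph.intro[OF \<rho>(1) graph]]) (use \<rho>(2) in blast)
  next
    assume "perm_group V G \<cong> PGL2 p"
    then obtain \<phi> where \<phi>: "\<phi> \<in> iso (perm_group V G) (perm_group {0..p} (carrier (PGL2 p)))"
      unfolding is_iso_def by (auto simp: PGL2_def perm_group_def)
    have "\<And>\<sigma>. \<sigma> \<in> carrier (PGL2 p) \<Longrightarrow> \<exists>M. mat_invertible M \<and> True \<and> \<sigma> = moebius p M"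
      unfolding carrier_PGL2 by blast
    then obtain \<rho> where \<rho>: "moebius_rep p V G \<rho>"
      using moebius_rep_of_iso[OF assms(5) \<phi>] by blast
    have "bij_betw \<phi> G (carrier (PGL2 p))" using \<phi> by (simp add: iso_def)
    then have "card G = card (carrier (PGL2 p))" by (rule bij_betw_same_card)
    also have "\<dots> = card V * (p * (2 * s))" using card_PGL2 card_V by simp
    finally have "card V * card {g \<in> G. g v0 = v0} = card V * (p * (2 * s))"
      using card_stabilizer_transitive[OF v0] arc_transitive_vertex_transitive[OF assms(2,4) _ assms(7) v0]
        prime_gt_0_nat[OF assms(1)] by simp
    then have card_stab: "card {g \<in> G. g v0 = v0} = p * (2 * s)" using \<open>card V \<noteq> 0\<close> by simp
    have "p * (2 * s) < p * p" using sp p1 by simp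
    then have "even (card {g \<in> G. g v0 = v0}) \<and> card {g \<in> G. g v0 = v0} < p\<^sup>2"
      unfolding card_stab by (simp add: power2_eq_square)
    then show ?thesis
      by (intro moebius_graph.has_triangle[OF moebius_graph.intro[OF \<rho> graph]]) (use assms(8) in blast)
  qed
qed

theorem lemma3p3:
  fixes V :: "'v set" and E :: "'v \<Rightarrow> 'v \<Rightarrow> bool" and G :: "('v \<Rightarrow> 'v) set" and p :: nat
  assumes "prime p"
    and "simple_graph V E"
    and "graph_connected V E"
    and "valency V E p"
    and "subgroup G (BijGroup V)" and "G \<subseteq> graph_aut V E"
    and "arc_transitive V E G"
    and "quasiprimitive V G \<or> biquasiprimitive V G"
    and "(is_complete_graph V E 12 \<and> perm_group V G \<cong> M11 \<and> p = 11)
         \<or> (\<exists>s. card V = (p\<^sup>2 - 1) div (2 * s)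
              \<and> (perm_group V G \<cong> PSL2 p \<or> perm_group V G \<cong> PGL2 p)
              \<and> mersenne_prime p
              \<and> (\<Prod>q\<in>prime_factors ((p - 1) div 2). q) dvd s
              \<and> s dvd (p - 1) div 2 \<and> s \<noteq> (p - 1) div 2)"
  shows "has_triangle V E"
proof -
  consider (K12) "is_complete_graph V E 12"
    | (projective) s where "card V = (p\<^sup>2 - 1) div (2 * s)" "s dvd (p - 1) div 2"
        "perm_group V G \<cong> PSL2 p \<or> perm_group V G \<cong> PGL2 p" "mersenne_prime p"
    using assms(9) by blast
  then show ?thesis
  proof cases
    case K12
    then show ?thesis using complete_graph_has_triangle[of V E 12] by simp
  next
    case projective
    then show ?thesis using has_triangle_PSL2_PGL2[OF assms(1-7) mersenne_prime_mod_4] by blast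
  qed
qed

end
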